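(* Let $d\ge2$, let $\Omega\subseteq\mathbb{R}^d$ be a bounded open set, let $K_\varepsilon\subseteq\Omega$ be compact, and let $\lambda_N$ be a Dirichlet eigenvalue of $\Omega$ with eigenspace $E(\lambda_N)$. Define, for $u,v\in H^1_0(\Omega\setminus K_\varepsilon)$, \[ q_\varepsilon(u,v)\equiv\int_{\Omega\setminus K_\varepsilon}\nabla u\cdot\nabla v\,dx-\lambda_N\int_{\Omega\setminus K_\varepsilon}uv\,dx, \] and, for $u,v\in E(\lambda_N)$, \[ r_\varepsilon(u,v)\equiv\int_\Omega\nabla V_{K_\varepsilon,u}\cdot\nabla V_{K_\varepsilon,v}\,dx-\lambda_N\int_\Omega V_{K_\varepsilon,u}V_{K_\varepsilon,v}\,dx . \] Let $\Pi_\varepsilon u\equiv u-V_{K_\varepsilon,u}$. Then $q_\varepsilon(\Pi_\varepsilon u,\Pi_\varepsilon v)=r_\varepsilon(u,v)$ for all $u,v\in E(\lambda_N)$.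
   Context: $H^1_0(\Omega\setminus K)$ is viewed inside $H^1_0(\Omega)$ by extension by zero. For a compact $K\subseteq\Omega$ and $u\in H^1_0(\Omega)$, $V_{K,u}$ is the unique minimizer of $\int_\Omega|\nabla f|^2dx$ over $\{f\in H^1_0(\Omega):f-u\in H^1_0(\Omega\setminus K)\}$; thus $\Pi_\varepsilon u\in H^1_0(\Omega\setminus K_\varepsilon)$. *)

theory Defs
  imports "HOL-Analysis.Analysis"
begin

fun Ck :: "nat \<Rightarrow> ('a::euclidean_space \<Rightarrow> real) \<Rightarrow> bool" where
  "Ck 0 f = continuous_on UNIV f"
| "Ck (Suc k) f = ((\<forall>x. f differentiable (at x)) \<and>
       (\<forall>i\<in>Basis. Ck k (\<lambda>x. frechet_derivative f (at x) i)))"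

definition smooth_fun :: "('a::euclidean_space \<Rightarrow> real) \<Rightarrow> bool" where
  "smooth_fun f \<longleftrightarrow> (\<forall>k. Ck k f)"

definition test_fun :: "'a::euclidean_space set \<Rightarrow> ('a \<Rightarrow> real) \<Rightarrow> bool" where
  "test_fun U f \<longleftrightarrow> smooth_fun f \<and> compact (closure {x. f x \<noteq> 0})
      \<and> closure {x. f x \<noteq> 0} \<subseteq> U"

definition cgrad :: "('a::euclidean_space \<Rightarrow> real) \<Rightarrow> 'a \<Rightarrow> 'a" where
  "cgrad f x = (\<Sum>i\<in>Basis. frechet_derivative f (at x) i *\<^sub>R i)"

section \<open>H^1_0(U), functions extended by zero to the whole space\<close>

definition H10_grad :: "'a::euclidean_space set \<Rightarrow> ('a \<Rightarrow> real) \<Rightarrow> ('a \<Rightarrow> 'a) \<Rightarrow> bool" where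
  "H10_grad U u g \<longleftrightarrow> u \<in> borel_measurable lborel \<and> g \<in> borel_measurable lborel \<and>
     (\<exists>\<phi>::nat \<Rightarrow> 'a \<Rightarrow> real. (\<forall>n. test_fun U (\<phi> n)) \<and>
        ((\<lambda>n. \<integral>\<^sup>+ x. ennreal ((\<phi> n x - u x)\<^sup>2) \<partial>lborel) \<longlonglongrightarrow> 0) \<and>
        ((\<lambda>n. \<integral>\<^sup>+ x. ennreal ((norm (cgrad (\<phi> n) x - g x))\<^sup>2) \<partial>lborel) \<longlonglongrightarrow> 0))"

definition H10 :: "'a::euclidean_space set \<Rightarrow> ('a \<Rightarrow> real) set" where
  "H10 U = {u. \<exists>g. H10_grad U u g}"

text \<open>Weak gradient (unique a.e.; independent of U since H^1_0(U) \<subseteq> H^1_0(R^d)).\<close>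
definition wgrad :: "('a::euclidean_space \<Rightarrow> real) \<Rightarrow> 'a \<Rightarrow> 'a" where
  "wgrad u = (SOME g. H10_grad UNIV u g)"

definition eigenspace_D :: "'a::euclidean_space set \<Rightarrow> real \<Rightarrow> ('a \<Rightarrow> real) set" where
  "eigenspace_D \<Omega> lam = {u \<in> H10 \<Omega>. \<forall>\<phi>\<in>H10 \<Omega>.
      (LINT x:\<Omega>|lborel. wgrad u x \<bullet> wgrad \<phi> x) = lam * (LINT x:\<Omega>|lborel. u x * \<phi> x)}"

definition dirichlet_eigenvalue :: "'a::euclidean_space set \<Rightarrow> real \<Rightarrow> bool" where
  "dirichlet_eigenvalue \<Omega> lam \<longleftrightarrow>
     (\<exists>u\<in>eigenspace_D \<Omega> lam. \<not> (AE x in lborel. u x = 0))"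

definition Vfun :: "'a::euclidean_space set \<Rightarrow> 'a set \<Rightarrow> ('a \<Rightarrow> real) \<Rightarrow> 'a \<Rightarrow> real" where
  "Vfun \<Omega> K u = (SOME f. f \<in> H10 \<Omega> \<and> (\<lambda>x. f x - u x) \<in> H10 (\<Omega> - K) \<and>
      (\<forall>h. h \<in> H10 \<Omega> \<and> (\<lambda>x. h x - u x) \<in> H10 (\<Omega> - K) \<longrightarrow>
         (LINT x:\<Omega>|lborel. (norm (wgrad f x))\<^sup>2) \<le> (LINT x:\<Omega>|lborel. (norm (wgrad h x))\<^sup>2)))"

definition Proj :: "'a::euclidean_space set \<Rightarrow> 'a set \<Rightarrow> ('a \<Rightarrow> real) \<Rightarrow> 'a \<Rightarrow> real" where
  "Proj \<Omega> K u = (\<lambda>x. u x - Vfun \<Omega> K u x)"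

definition qform :: "'a::euclidean_space set \<Rightarrow> 'a set \<Rightarrow> real \<Rightarrow> ('a \<Rightarrow> real) \<Rightarrow> ('a \<Rightarrow> real) \<Rightarrow> real" where
  "qform \<Omega> K lam u v = (LINT x:(\<Omega> - K)|lborel. wgrad u x \<bullet> wgrad v x)
      - lam * (LINT x:(\<Omega> - K)|lborel. u x * v x)"

definition rform :: "'a::euclidean_space set \<Rightarrow> 'a set \<Rightarrow> real \<Rightarrow> ('a \<Rightarrow> real) \<Rightarrow> ('a \<Rightarrow> real) \<Rightarrow> real" where
  "rform \<Omega> K lam u v = (LINT x:\<Omega>|lborel. wgrad (Vfun \<Omega> K u) x \<bullet> wgrad (Vfun \<Omega> K v) x)
      - lam * (LINT x:\<Omega>|lborel. Vfun \<Omega> K u x * Vfun \<Omega> K v x)"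

end

theory Submission
  imports Defs
begin

text \<open>Write \<open>V = V\<^sub>K u\<close> and \<open>V' = V\<^sub>K v\<close>. Both \<open>V\<close> and \<open>u - V\<close> lie in \<open>H\<^sup>1\<^sub>0(\<Omega>)\<close>, and
  the form \<open>B(f, g) = \<integral> \<nabla>f \<cdot> \<nabla>g - \<lambda> \<integral> f g\<close> is bilinear on \<open>H\<^sup>1\<^sub>0(\<Omega>)\<close> and vanishes as soon as
  one argument is a \<open>\<lambda>\<close>-eigenfunction. Expanding \<open>B(u - V, v - V')\<close> therefore leaves only
  \<open>B(V, V')\<close>; and since \<open>\<Pi> u = u - V\<close> lies in \<open>H\<^sup>1\<^sub>0(\<Omega> - K)\<close>, the integrals over \<open>\<Omega> - K\<close>
  in \<open>q\<close> are integrals over the whole space.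

  But \<open>V\<^sub>K u\<close> is defined by a choice, so one must show that a minimiser exists (the Dirichlet
  principle): a minimising sequence of test functions has Cauchy gradients by the parallelogram
  law, hence is Cauchy in \<open>L\<^sup>2\<close> by the Poincare inequality on the bounded set \<open>\<Omega>\<close>, and converges
  by completeness of \<open>L\<^sup>2\<close>.\<close>

abbreviation partial :: "('a::euclidean_space \<Rightarrow> real) \<Rightarrow> 'a \<Rightarrow> 'a \<Rightarrow> real" where
  "partial f i \<equiv> (\<lambda>x. frechet_derivative f (at x) i)"

abbreviation supp :: "('a::euclidean_space \<Rightarrow> real) \<Rightarrow> 'a set" where
  "supp f \<equiv> closure {x. f x \<noteq> 0}"

lemma frechet_derivative_lincomb:
  fixes f g :: "'a::euclidean_space \<Rightarrow> real"
  assumes "f differentiable at x" "g differentiable at x"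
  shows "frechet_derivative (\<lambda>x. a * f x + b * g x) (at x) i
        = a * frechet_derivative f (at x) i + b * frechet_derivative g (at x) i"
proof -
  have "((\<lambda>x. a * f x + b * g x) has_derivative
     (\<lambda>h. a * frechet_derivative f (at x) h + b * frechet_derivative g (at x) h)) (at x)"
    using assms by (intro derivative_intros) (auto simp: frechet_derivative_works[symmetric])
  then have "frechet_derivative (\<lambda>x. a * f x + b * g x) (at x)
      = (\<lambda>h. a * frechet_derivative f (at x) h + b * frechet_derivative g (at x) h)"
    by (rule frechet_derivative_at[symmetric])
  then show ?thesis by simp
qed

lemma frechet_derivative_mult:
  fixes f g :: "'a::euclidean_space \<Rightarrow> real"
  assumes "f differentiable at x" "g differentiable at x"
  shows "frechet_derivative (\<lambda>x. f x * g x) (at x) i = partial f i x * g x + f x * partial g i x"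
proof -
  have "((\<lambda>x. f x * g x) has_derivative
     (\<lambda>h. f x * frechet_derivative g (at x) h + frechet_derivative f (at x) h * g x)) (at x)"
    using assms by (intro has_derivative_mult) (auto simp: frechet_derivative_works[symmetric])
  then have "frechet_derivative (\<lambda>x. f x * g x) (at x)
      = (\<lambda>h. f x * frechet_derivative g (at x) h + frechet_derivative f (at x) h * g x)"
    by (rule frechet_derivative_at[symmetric])
  then show ?thesis by simp
qed

lemma Ck_lincomb:
  fixes f g :: "'a::euclidean_space \<Rightarrow> real"
  shows "Ck k f \<Longrightarrow> Ck k g \<Longrightarrow> Ck k (\<lambda>x. a * f x + b * g x)"
proof (induction k arbitrary: f g)
  case 0
  then show ?case by (auto intro!: continuous_intros)
next
  case (Suc k)
  have d: "\<forall>x. f differentiable at x" "\<forall>x. g differentiable at x" using Suc.prems by auto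
  show ?case
  proof (simp only: Ck.simps, intro conjI ballI allI)
    fix x show "(\<lambda>x. a * f x + b * g x) differentiable at x"
      using d unfolding differentiable_def
      by (metis (no_types) frechet_derivative_works has_derivative_add has_derivative_mult_right)
  next
    fix i :: 'a assume i: "i \<in> Basis"
    have "partial (\<lambda>x. a * f x + b * g x) i = (\<lambda>x. a * partial f i x + b * partial g i x)"
      using d by (simp add: frechet_derivative_lincomb)
    moreover have "Ck k (partial f i)" "Ck k (partial g i)"
      using Suc.prems i by auto
    ultimately show "Ck k (partial (\<lambda>x. a * f x + b * g x) i)"
      using Suc.IH by simp
  qed
qed

lemma frechet_derivative_zero_on_open:
  fixes f :: "'a::euclidean_space \<Rightarrow> real"
  assumes "open S" "\<forall>y\<in>S. f y = 0" "x \<in> S"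
  shows "frechet_derivative f (at x) = (\<lambda>h. 0)"
proof -
  have "((\<lambda>y. 0::real) has_derivative (\<lambda>h. 0)) (at x)" by (rule has_derivative_const)
  then have "(f has_derivative (\<lambda>h. 0)) (at x)"
    by (rule has_derivative_transform_within_open[OF _ assms(1) assms(3)]) (use assms(2) in auto)
  from frechet_derivative_at[OF this] show ?thesis by simp
qed

lemma outside_supp:
  fixes f :: "'a::euclidean_space \<Rightarrow> real"
  assumes "x \<notin> supp f"
  shows "f x = 0" "partial f i x = 0" "partial (partial f i) j x = 0"
proof -
  have open_compl: "open (- supp f)" by blast
  have f0: "\<forall>y\<in>- supp f. f y = 0"
    using closure_subset[of "{x. f x \<noteq> 0}"] by auto
  show "f x = 0" using assms f0 by blast
  have df0: "\<forall>y\<in>- supp f. partial f i y = 0"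
    using frechet_derivative_zero_on_open[OF open_compl f0] by simp
  then show "partial f i x = 0" using assms by blast
  have "frechet_derivative (partial f i) (at x) = (\<lambda>h. 0)"
    by (rule frechet_derivative_zero_on_open[OF open_compl df0]) (use assms in blast)
  then show "partial (partial f i) j x = 0" by simp
qed

lemma outside_suppD:
  fixes f :: "'a::euclidean_space \<Rightarrow> real"
  shows "x \<notin> supp f \<Longrightarrow> f x = 0 \<and> (\<forall>i. partial f i x = 0) \<and> (\<forall>i j. partial (partial f i) j x = 0)"
  using outside_supp by blast

lemma test_fun_lincomb:
  fixes f g :: "'a::euclidean_space \<Rightarrow> real"
  assumes "test_fun U f" "test_fun U g"
  shows "test_fun U (\<lambda>x. a * f x + b * g x)"
proof -
  have smooth: "smooth_fun (\<lambda>x. a * f x + b * g x)"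
    using assms Ck_lincomb unfolding test_fun_def smooth_fun_def by blast
  have "{x. a * f x + b * g x \<noteq> 0} \<subseteq> {x. f x \<noteq> 0} \<union> {x. g x \<noteq> 0}" by auto
  then have sub: "supp (\<lambda>x. a * f x + b * g x) \<subseteq> supp f \<union> supp g"
    unfolding closure_Un[symmetric] by (rule closure_mono)
  have "compact (supp f \<union> supp g)" using assms unfolding test_fun_def by auto
  then have "compact (supp (\<lambda>x. a * f x + b * g x))"
    using sub by (meson closed_closure compact_eq_bounded_closed bounded_subset)
  then show ?thesis using smooth sub assms unfolding test_fun_def by blast
qed

lemma test_fun_zero: "test_fun U (\<lambda>x. 0::real)"
  unfolding test_fun_def smooth_fun_def
proof (intro conjI allI)
  show "Ck k (\<lambda>x::'a. 0::real)" for k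
  proof (induction k)
    case 0 then show ?case by simp
  next
    case (Suc k)
    have "frechet_derivative (\<lambda>x::'a. 0::real) (at x) = (\<lambda>h. 0)" for x
      using frechet_derivative_zero_on_open[of UNIV "\<lambda>x::'a. 0::real" x] by simp
    then show ?case using Suc by simp
  qed
qed auto

lemma test_fun_mono: "test_fun U f \<Longrightarrow> U \<subseteq> V \<Longrightarrow> test_fun V f"
  unfolding test_fun_def by auto

lemma test_funD:
  fixes f :: "'a::euclidean_space \<Rightarrow> real"
  assumes "test_fun U f"
  shows "\<And>x. f differentiable at x" "continuous_on UNIV f"
    "\<And>i. i \<in> Basis \<Longrightarrow> continuous_on UNIV (partial f i)"
    "\<And>i x. i \<in> Basis \<Longrightarrow> partial f i differentiable at x"
    "\<And>i j. i \<in> Basis \<Longrightarrow> j \<in> Basis \<Longrightarrow> continuous_on UNIV (partial (partial f i) j)"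
    "compact (supp f)" "supp f \<subseteq> U"
proof -
  have C2: "Ck (Suc (Suc 0)) f" using assms unfolding test_fun_def smooth_fun_def by blast
  show d: "\<And>x. f differentiable at x" using C2 by simp
  then show "continuous_on UNIV f"
    by (simp add: continuous_at_imp_continuous_on differentiable_imp_continuous_within)
  show "\<And>i x. i \<in> Basis \<Longrightarrow> partial f i differentiable at x" using C2 by simp
  then show "\<And>i. i \<in> Basis \<Longrightarrow> continuous_on UNIV (partial f i)"
    by (simp add: continuous_at_imp_continuous_on differentiable_imp_continuous_within)
  show "\<And>i j. i \<in> Basis \<Longrightarrow> j \<in> Basis \<Longrightarrow> continuous_on UNIV (partial (partial f i) j)"
    using C2 by simp
  show "compact (supp f)" "supp f \<subseteq> U" using assms unfolding test_fun_def by auto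
qed

lemma cgrad_inner_Basis:
  fixes f :: "'a::euclidean_space \<Rightarrow> real"
  assumes "i \<in> Basis"
  shows "cgrad f x \<bullet> i = partial f i x"
  unfolding cgrad_def using assms by (simp add: inner_sum_left inner_Basis if_distrib cong: if_cong)

lemma norm_cgrad_sq:
  fixes f :: "'a::euclidean_space \<Rightarrow> real"
  shows "(norm (cgrad f x))\<^sup>2 = (\<Sum>i\<in>Basis. (partial f i x)\<^sup>2)"
  unfolding power2_norm_eq_inner
  by (subst euclidean_inner) (simp add: cgrad_inner_Basis power2_eq_square)

lemma cgrad_outside_supp:
  fixes f :: "'a::euclidean_space \<Rightarrow> real"
  assumes "x \<notin> supp f"
  shows "cgrad f x = 0"
  unfolding cgrad_def using outside_supp(2)[OF assms] by simp

lemma cgrad_lincomb: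
  fixes f g :: "'a::euclidean_space \<Rightarrow> real"
  assumes "test_fun U f" "test_fun V g"
  shows "cgrad (\<lambda>x. a * f x + b * g x) x = a *\<^sub>R cgrad f x + b *\<^sub>R cgrad g x"
  unfolding cgrad_def
  using frechet_derivative_lincomb[OF test_funD(1)[OF assms(1)] test_funD(1)[OF assms(2)]]
  by (simp add: scaleR_sum_right sum.distrib scaleR_add_left)

lemma test_fun_cgrad_continuous:
  fixes f :: "'a::euclidean_space \<Rightarrow> real"
  assumes "test_fun U f"
  shows "continuous_on UNIV (cgrad f)"
  unfolding cgrad_def[abs_def]
  by (intro continuous_on_sum continuous_on_scaleR continuous_on_const test_funD(3)[OF assms])

definition square_integrable :: "('a::euclidean_space \<Rightarrow> 'b::euclidean_space) \<Rightarrow> bool" where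
  "square_integrable f \<longleftrightarrow> f \<in> borel_measurable lborel \<and> integrable lborel (\<lambda>x. (norm (f x))\<^sup>2)"

definition L2_sqnorm :: "('a::euclidean_space \<Rightarrow> 'b::euclidean_space) \<Rightarrow> real" where
  "L2_sqnorm f = (\<integral>x. (norm (f x))\<^sup>2 \<partial>lborel)"

lemma L2_sqnorm_nonneg: "0 \<le> L2_sqnorm f"
  unfolding L2_sqnorm_def by (rule integral_nonneg_AE) auto

lemma L2_sqnorm_eq_integral_inner: "L2_sqnorm h = (\<integral>x. h x \<bullet> h x \<partial>lborel)"
  unfolding L2_sqnorm_def by (simp add: power2_norm_eq_inner)

lemma L2_sqnorm_scaleR: "L2_sqnorm (\<lambda>x. c *\<^sub>R f x) = c\<^sup>2 * L2_sqnorm f"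
  unfolding L2_sqnorm_def by (simp add: power_mult_distrib)

lemma norm_add_sq_le:
  fixes x y :: "'a::real_normed_vector"
  shows "(norm (x + y))\<^sup>2 \<le> 2 * (norm x)\<^sup>2 + 2 * (norm y)\<^sup>2"
proof -
  have "(norm (x + y))\<^sup>2 \<le> (norm x + norm y)\<^sup>2"
    by (simp add: norm_triangle_ineq power_mono)
  also have "\<dots> \<le> 2 * (norm x)\<^sup>2 + 2 * (norm y)\<^sup>2"
    using sum_squares_bound[of "norm x" "norm y"] by (simp add: power2_sum)
  finally show ?thesis .
qed

lemma square_integrable_add:
  fixes f g :: "'a::euclidean_space \<Rightarrow> 'b::euclidean_space"
  assumes "square_integrable f" "square_integrable g"
  shows "square_integrable (\<lambda>x. f x + g x)"
proof -
  have bound: "integrable lborel (\<lambda>x. 2 * (norm (f x))\<^sup>2 + 2 * (norm (g x))\<^sup>2)"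
    using assms by (auto simp: square_integrable_def)
  have [measurable]: "f \<in> borel_measurable lborel" "g \<in> borel_measurable lborel"
    using assms by (simp_all add: square_integrable_def)
  have "integrable lborel (\<lambda>x. (norm (f x + g x))\<^sup>2)"
  proof (rule Bochner_Integration.integrable_bound[OF bound])
    show "(\<lambda>x. (norm (f x + g x))\<^sup>2) \<in> borel_measurable lborel" by measurable
    show "AE x in lborel. norm ((norm (f x + g x))\<^sup>2) \<le> norm (2 * (norm (f x))\<^sup>2 + 2 * (norm (g x))\<^sup>2)"
      by (rule AE_I2) (simp add: norm_add_sq_le)
  qed
  then show ?thesis by (simp add: square_integrable_def)
qed

lemma square_integrable_scaleR:
  fixes f :: "'a::euclidean_space \<Rightarrow> 'b::euclidean_space"
  assumes "square_integrable f"
  shows "square_integrable (\<lambda>x. c *\<^sub>R f x)"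
proof -
  have [measurable]: "f \<in> borel_measurable lborel" using assms by (simp add: square_integrable_def)
  have "integrable lborel (\<lambda>x. c\<^sup>2 * (norm (f x))\<^sup>2)" using assms by (auto simp: square_integrable_def)
  then show ?thesis by (simp add: square_integrable_def power_mult_distrib)
qed

lemma square_integrable_diff:
  "square_integrable f \<Longrightarrow> square_integrable g \<Longrightarrow> square_integrable (\<lambda>x. f x - g x)"
  using square_integrable_add[of f "\<lambda>x. (-1) *\<^sub>R g x"] square_integrable_scaleR[of g "-1"] by simp

lemma square_integrable_norm:
  fixes f :: "'a::euclidean_space \<Rightarrow> 'b::euclidean_space"
  assumes "square_integrable f" shows "square_integrable (\<lambda>x. norm (f x))"
proof -
  have [measurable]: "f \<in> borel_measurable lborel" using assms by (simp add: square_integrable_def)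
  have "(\<lambda>x. norm (f x)) \<in> borel_measurable lborel" by measurable
  then show ?thesis using assms by (simp add: square_integrable_def)
qed

lemma integrable_inner:
  fixes f g :: "'a::euclidean_space \<Rightarrow> 'b::euclidean_space"
  assumes "square_integrable f" "square_integrable g"
  shows "integrable lborel (\<lambda>x. f x \<bullet> g x)"
proof -
  have bound: "integrable lborel (\<lambda>x. (norm (f x))\<^sup>2 + (norm (g x))\<^sup>2)"
    using assms by (auto simp: square_integrable_def)
  have pointwise: "norm (f x \<bullet> g x) \<le> norm ((norm (f x))\<^sup>2 + (norm (g x))\<^sup>2)" for x
  proof -
    have "norm (f x \<bullet> g x) \<le> norm (f x) * norm (g x)" using Cauchy_Schwarz_ineq2 by simp
    also have "\<dots> \<le> (norm (f x))\<^sup>2 + (norm (g x))\<^sup>2"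
      using sum_squares_bound[of "norm (f x)" "norm (g x)"]
        mult_nonneg_nonneg[OF norm_ge_zero norm_ge_zero, of "f x" "g x"] by linarith
    finally show ?thesis by simp
  qed
  have [measurable]: "f \<in> borel_measurable lborel" "g \<in> borel_measurable lborel"
    using assms by (simp_all add: square_integrable_def)
  show ?thesis
  proof (rule Bochner_Integration.integrable_bound[OF bound])
    show "(\<lambda>x. f x \<bullet> g x) \<in> borel_measurable lborel" by measurable
  qed (use pointwise in simp)
qed

lemma integrable_mult:
  fixes f g :: "'a::euclidean_space \<Rightarrow> real"
  assumes "square_integrable f" "square_integrable g"
  shows "integrable lborel (\<lambda>x. f x * g x)"
  using integrable_inner[OF assms] by simp

lemma nn_integral_norm_sq:
  fixes h :: "'a::euclidean_space \<Rightarrow> 'b::euclidean_space"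
  assumes "square_integrable h"
  shows "(\<integral>\<^sup>+x. ennreal ((norm (h x))\<^sup>2) \<partial>lborel) = ennreal (L2_sqnorm h)"
  unfolding L2_sqnorm_def by (rule nn_integral_eq_integral) (use assms in \<open>auto simp: square_integrable_def\<close>)

lemma L2_Cauchy_Schwarz:
  fixes f g :: "'a::euclidean_space \<Rightarrow> 'b::euclidean_space"
  assumes "square_integrable f" "square_integrable g"
  shows "\<bar>\<integral>x. f x \<bullet> g x \<partial>lborel\<bar> \<le> sqrt (L2_sqnorm f) * sqrt (L2_sqnorm g)"
proof -
  have [measurable]: "f \<in> borel_measurable lborel" "g \<in> borel_measurable lborel"
    using assms by (simp_all add: square_integrable_def)
  define P where "P = (\<integral>x. norm (f x) * norm (g x) \<partial>lborel)"
  have iP: "integrable lborel (\<lambda>x. norm (f x) * norm (g x))"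
    using integrable_mult[OF square_integrable_norm[OF assms(1)] square_integrable_norm[OF assms(2)]] .
  have P0: "0 \<le> P" unfolding P_def by (rule integral_nonneg_AE) auto
  have "(\<integral>\<^sup>+x. ennreal (norm (f x)) * ennreal (norm (g x)) \<partial>lborel)\<^sup>2
      \<le> (\<integral>\<^sup>+x. ennreal (norm (f x)) ^ 2 \<partial>lborel) * (\<integral>\<^sup>+x. ennreal (norm (g x)) ^ 2 \<partial>lborel)"
    by (rule Cauchy_Schwarz_nn_integral) measurable
  also have "(\<integral>\<^sup>+x. ennreal (norm (f x)) ^ 2 \<partial>lborel) = ennreal (L2_sqnorm f)"
    using nn_integral_norm_sq[OF assms(1)] by (simp add: ennreal_power)
  also have "(\<integral>\<^sup>+x. ennreal (norm (g x)) ^ 2 \<partial>lborel) = ennreal (L2_sqnorm g)"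
    using nn_integral_norm_sq[OF assms(2)] by (simp add: ennreal_power)
  also have "(\<integral>\<^sup>+x. ennreal (norm (f x)) * ennreal (norm (g x)) \<partial>lborel) = ennreal P"
    unfolding P_def
    by (subst nn_integral_eq_integral[symmetric]) (use iP in \<open>auto simp: ennreal_mult\<close>)
  finally have "ennreal (P\<^sup>2) \<le> ennreal (L2_sqnorm f * L2_sqnorm g)"
    using P0 L2_sqnorm_nonneg[of f] L2_sqnorm_nonneg[of g] by (simp add: ennreal_power ennreal_mult)
  then have "P\<^sup>2 \<le> L2_sqnorm f * L2_sqnorm g"
    using L2_sqnorm_nonneg[of f] L2_sqnorm_nonneg[of g] by (simp add: ennreal_le_iff)
  then have "P \<le> sqrt (L2_sqnorm f * L2_sqnorm g)" using P0 by (simp add: real_le_rsqrt)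
  then have "P \<le> sqrt (L2_sqnorm f) * sqrt (L2_sqnorm g)" by (simp add: real_sqrt_mult)
  moreover have "\<bar>\<integral>x. f x \<bullet> g x \<partial>lborel\<bar> \<le> P"
  proof -
    have "\<bar>\<integral>x. f x \<bullet> g x \<partial>lborel\<bar> \<le> (\<integral>x. \<bar>f x \<bullet> g x\<bar> \<partial>lborel)"
      by (rule integral_abs_bound)
    also have "\<dots> \<le> P" unfolding P_def
      by (rule integral_mono[OF _ iP]) (use integrable_inner[OF assms] Cauchy_Schwarz_ineq2 in auto)
    finally show ?thesis .
  qed
  ultimately show ?thesis by linarith
qed

lemma L2_sqnorm_add_le:
  fixes f g :: "'a::euclidean_space \<Rightarrow> 'b::euclidean_space"
  assumes "square_integrable f" "square_integrable g"
  shows "L2_sqnorm (\<lambda>x. f x + g x) \<le> 2 * L2_sqnorm f + 2 * L2_sqnorm g"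
proof -
  have "L2_sqnorm (\<lambda>x. f x + g x) \<le> (\<integral>x. 2 * (norm (f x))\<^sup>2 + 2 * (norm (g x))\<^sup>2 \<partial>lborel)"
    unfolding L2_sqnorm_def
    by (rule integral_mono, use square_integrable_add[OF assms] assms in
        \<open>simp_all add: square_integrable_def norm_add_sq_le\<close>)
  also have "\<dots> = 2 * L2_sqnorm f + 2 * L2_sqnorm g"
    unfolding L2_sqnorm_def using assms by (simp add: square_integrable_def)
  finally show ?thesis .
qed

lemma L2_sqnorm_lincomb_le:
  fixes f g :: "'a::euclidean_space \<Rightarrow> 'b::euclidean_space"
  assumes "square_integrable f" "square_integrable g"
  shows "L2_sqnorm (\<lambda>x. a *\<^sub>R f x + b *\<^sub>R g x) \<le> 2 * a\<^sup>2 * L2_sqnorm f + 2 * b\<^sup>2 * L2_sqnorm g"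
  using L2_sqnorm_add_le[OF square_integrable_scaleR[OF assms(1), of a] square_integrable_scaleR[OF assms(2), of b]]
  by (simp add: L2_sqnorm_scaleR)

lemma L2_sqnorm_lincomb_tendsto_0:
  fixes f g :: "nat \<Rightarrow> 'a::euclidean_space \<Rightarrow> 'b::euclidean_space"
  assumes "\<And>n. square_integrable (f n)" "\<And>n. square_integrable (g n)"
    and "(\<lambda>n. L2_sqnorm (f n)) \<longlonglongrightarrow> 0" "(\<lambda>n. L2_sqnorm (g n)) \<longlonglongrightarrow> 0"
  shows "(\<lambda>n. L2_sqnorm (\<lambda>x. a *\<^sub>R f n x + b *\<^sub>R g n x)) \<longlonglongrightarrow> 0"
proof (rule tendsto_sandwich[OF _ _ tendsto_const])
  show "\<forall>\<^sub>F n in sequentially. 0 \<le> L2_sqnorm (\<lambda>x. a *\<^sub>R f n x + b *\<^sub>R g n x)"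
    by (simp add: L2_sqnorm_nonneg)
  show "\<forall>\<^sub>F n in sequentially. L2_sqnorm (\<lambda>x. a *\<^sub>R f n x + b *\<^sub>R g n x)
      \<le> 2 * a\<^sup>2 * L2_sqnorm (f n) + 2 * b\<^sup>2 * L2_sqnorm (g n)"
    using L2_sqnorm_lincomb_le[OF assms(1,2)] by simp
  show "(\<lambda>n. 2 * a\<^sup>2 * L2_sqnorm (f n) + 2 * b\<^sup>2 * L2_sqnorm (g n)) \<longlonglongrightarrow> 0"
    using tendsto_add[OF tendsto_mult_right_zero[OF assms(3)] tendsto_mult_right_zero[OF assms(4)]]
    by simp
qed

lemma L2_sqnorm_eq_0_AE:
  fixes f :: "'a::euclidean_space \<Rightarrow> 'b::euclidean_space"
  assumes "square_integrable f" "L2_sqnorm f = 0" shows "AE x in lborel. f x = 0"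
proof -
  have "AE x in lborel. (norm (f x))\<^sup>2 = 0"
    using assms integral_nonneg_eq_0_iff_AE[of lborel "\<lambda>x. (norm (f x))\<^sup>2"]
    by (simp add: square_integrable_def L2_sqnorm_def)
  then show ?thesis by simp
qed

lemma tendsto_integral_inner:
  fixes f g :: "nat \<Rightarrow> 'a::euclidean_space \<Rightarrow> 'b::euclidean_space"
  assumes f: "\<And>n. square_integrable (f n)" and F: "square_integrable F"
    and g: "\<And>n. square_integrable (g n)" and G: "square_integrable G"
    and f_lim: "(\<lambda>n. L2_sqnorm (\<lambda>x. f n x - F x)) \<longlonglongrightarrow> 0"
    and g_lim: "(\<lambda>n. L2_sqnorm (\<lambda>x. g n x - G x)) \<longlonglongrightarrow> 0"
  shows "(\<lambda>n. \<integral>x. f n x \<bullet> g n x \<partial>lborel) \<longlonglongrightarrow> (\<integral>x. F x \<bullet> G x \<partial>lborel)"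
proof -
  define a where "a n = L2_sqnorm (\<lambda>x. f n x - F x)" for n
  define b where "b n = L2_sqnorm (\<lambda>x. g n x - G x)" for n
  define B where "B n = sqrt (a n) * sqrt (2 * b n + 2 * L2_sqnorm G) + sqrt (L2_sqnorm F) * sqrt (b n)" for n
  have "B \<longlonglongrightarrow> sqrt 0 * sqrt (2 * 0 + 2 * L2_sqnorm G) + sqrt (L2_sqnorm F) * sqrt 0"
    unfolding B_def using f_lim g_lim unfolding a_def[symmetric] b_def[symmetric]
    by (intro tendsto_intros)
  then have B0: "B \<longlonglongrightarrow> 0" by simp
  have bound: "norm ((\<integral>x. f n x \<bullet> g n x \<partial>lborel) - (\<integral>x. F x \<bullet> G x \<partial>lborel)) \<le> B n" for n
  proof -
    have fF: "square_integrable (\<lambda>x. f n x - F x)" using f F by (rule square_integrable_diff)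
    have gG: "square_integrable (\<lambda>x. g n x - G x)" using g G by (rule square_integrable_diff)
    have "(\<integral>x. (f n x - F x) \<bullet> g n x \<partial>lborel) + (\<integral>x. F x \<bullet> (g n x - G x) \<partial>lborel)
        = (\<integral>x. (f n x - F x) \<bullet> g n x + F x \<bullet> (g n x - G x) \<partial>lborel)"
      using Bochner_Integration.integral_add[OF integrable_inner[OF fF g] integrable_inner[OF F gG]] by simp
    also have "\<dots> = (\<integral>x. f n x \<bullet> g n x - F x \<bullet> G x \<partial>lborel)"
      by (simp add: inner_diff_left inner_diff_right)
    also have "\<dots> = (\<integral>x. f n x \<bullet> g n x \<partial>lborel) - (\<integral>x. F x \<bullet> G x \<partial>lborel)"
      by (rule Bochner_Integration.integral_diff) (intro integrable_inner f g F G)+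
    finally have split: "(\<integral>x. f n x \<bullet> g n x \<partial>lborel) - (\<integral>x. F x \<bullet> G x \<partial>lborel)
        = (\<integral>x. (f n x - F x) \<bullet> g n x \<partial>lborel) + (\<integral>x. F x \<bullet> (g n x - G x) \<partial>lborel)" by simp
    have "L2_sqnorm (g n) = L2_sqnorm (\<lambda>x. (g n x - G x) + G x)" by simp
    also have "\<dots> \<le> 2 * b n + 2 * L2_sqnorm G" unfolding b_def by (rule L2_sqnorm_add_le[OF gG G])
    finally have gn: "L2_sqnorm (g n) \<le> 2 * b n + 2 * L2_sqnorm G" .
    have "\<bar>\<integral>x. (f n x - F x) \<bullet> g n x \<partial>lborel\<bar> \<le> sqrt (a n) * sqrt (L2_sqnorm (g n))"
      unfolding a_def by (rule L2_Cauchy_Schwarz[OF fF g])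
    also have "\<dots> \<le> sqrt (a n) * sqrt (2 * b n + 2 * L2_sqnorm G)"
      by (rule mult_left_mono) (use gn in \<open>auto simp: a_def L2_sqnorm_nonneg\<close>)
    finally have t1: "\<bar>\<integral>x. (f n x - F x) \<bullet> g n x \<partial>lborel\<bar> \<le> sqrt (a n) * sqrt (2 * b n + 2 * L2_sqnorm G)" .
    have t2: "\<bar>\<integral>x. F x \<bullet> (g n x - G x) \<partial>lborel\<bar> \<le> sqrt (L2_sqnorm F) * sqrt (b n)"
      unfolding b_def by (rule L2_Cauchy_Schwarz[OF F gG])
    show ?thesis unfolding split B_def using t1 t2 by simp
  qed
  have "(\<lambda>n. (\<integral>x. f n x \<bullet> g n x \<partial>lborel) - (\<integral>x. F x \<bullet> G x \<partial>lborel)) \<longlonglongrightarrow> 0"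
    by (rule Lim_null_comparison[OF _ B0]) (use bound in auto)
  then show ?thesis by (simp add: Lim_null[symmetric])
qed

lemma L2_sqnorm_tendsto:
  fixes f :: "nat \<Rightarrow> 'a::euclidean_space \<Rightarrow> 'b::euclidean_space"
  assumes "\<And>n. square_integrable (f n)" "square_integrable F"
    and "(\<lambda>n. L2_sqnorm (\<lambda>x. f n x - F x)) \<longlonglongrightarrow> 0"
  shows "(\<lambda>n. L2_sqnorm (f n)) \<longlonglongrightarrow> L2_sqnorm F"
  using tendsto_integral_inner[OF assms(1,2,1,2,3,3)] by (simp add: L2_sqnorm_eq_integral_inner)

lemma integral_inner_diff_diff:
  fixes a b c d :: "'a::euclidean_space \<Rightarrow> 'b::euclidean_space"
  assumes "square_integrable a" "square_integrable b" "square_integrable c" "square_integrable d"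
  shows "(\<integral>x. (a x - b x) \<bullet> (c x - d x) \<partial>lborel)
    = (\<integral>x. a x \<bullet> c x \<partial>lborel) - (\<integral>x. a x \<bullet> d x \<partial>lborel) - (\<integral>x. b x \<bullet> c x \<partial>lborel) + (\<integral>x. b x \<bullet> d x \<partial>lborel)"
proof -
  have i: "integrable lborel (\<lambda>x. a x \<bullet> c x)" "integrable lborel (\<lambda>x. a x \<bullet> d x)"
    "integrable lborel (\<lambda>x. b x \<bullet> c x)" "integrable lborel (\<lambda>x. b x \<bullet> d x)"
    using assms by (auto intro: integrable_inner)
  have "(\<lambda>x. (a x - b x) \<bullet> (c x - d x)) = (\<lambda>x. ((a x \<bullet> c x - a x \<bullet> d x) - b x \<bullet> c x) + b x \<bullet> d x)"
    by (auto simp: inner_diff_left inner_diff_right)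
  then have "(\<integral>x. (a x - b x) \<bullet> (c x - d x) \<partial>lborel) = (\<integral>x. ((a x \<bullet> c x - a x \<bullet> d x) - b x \<bullet> c x) + b x \<bullet> d x \<partial>lborel)"
    by simp
  also have "\<dots> = (\<integral>x. (a x \<bullet> c x - a x \<bullet> d x) - b x \<bullet> c x \<partial>lborel) + (\<integral>x. b x \<bullet> d x \<partial>lborel)"
    using i by (intro Bochner_Integration.integral_add) auto
  also have "(\<integral>x. (a x \<bullet> c x - a x \<bullet> d x) - b x \<bullet> c x \<partial>lborel) = (\<integral>x. a x \<bullet> c x - a x \<bullet> d x \<partial>lborel) - (\<integral>x. b x \<bullet> c x \<partial>lborel)"
    using i by (intro Bochner_Integration.integral_diff) auto
  also have "(\<integral>x. a x \<bullet> c x - a x \<bullet> d x \<partial>lborel) = (\<integral>x. a x \<bullet> c x \<partial>lborel) - (\<integral>x. a x \<bullet> d x \<partial>lborel)"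
    using i by (intro Bochner_Integration.integral_diff) auto
  finally show ?thesis .
qed

lemma integrable_continuous_compact_support:
  fixes h :: "'a::euclidean_space \<Rightarrow> 'b::euclidean_space"
  assumes "continuous_on UNIV h" "compact C" "\<And>x. x \<notin> C \<Longrightarrow> h x = 0"
  shows "integrable lborel h"
proof -
  have "integrable lborel (\<lambda>x. indicator C x *\<^sub>R h x)"
    by (rule borel_integrable_compact[OF assms(2)]) (use assms(1) continuous_on_subset in blast)
  moreover have "(\<lambda>x. indicator C x *\<^sub>R h x) = h"
    using assms(3) by (auto simp: indicator_def)
  ultimately show ?thesis by simp
qed

lemma square_integrable_continuous_compact_support:
  fixes h :: "'a::euclidean_space \<Rightarrow> 'b::euclidean_space"
  assumes "continuous_on UNIV h" "compact C" "\<And>x. x \<notin> C \<Longrightarrow> h x = 0"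
  shows "square_integrable h"
  unfolding square_integrable_def
proof
  show "h \<in> borel_measurable lborel" using assms(1) by (simp add: borel_measurable_continuous_onI)
  show "integrable lborel (\<lambda>x. (norm (h x))\<^sup>2)"
    by (rule integrable_continuous_compact_support[OF _ assms(2)])
      (use assms in \<open>auto intro!: continuous_intros\<close>)
qed

lemma test_fun_square_integrable:
  fixes f :: "'a::euclidean_space \<Rightarrow> real"
  assumes "test_fun U f"
  shows "square_integrable f" "square_integrable (cgrad f)"
proof -
  have C: "compact (supp f)" using test_funD[OF assms] by blast
  show "square_integrable f"
    by (rule square_integrable_continuous_compact_support[OF test_funD(2)[OF assms] C])
      (rule outside_supp(1))
  show "square_integrable (cgrad f)"
    by (rule square_integrable_continuous_compact_support[OF test_fun_cgrad_continuous[OF assms] C])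
      (rule cgrad_outside_supp)
qed

section \<open>Integration by parts and the Poincare inequality\<close>

lemma has_real_derivative_on_line:
  fixes F :: "'a::euclidean_space \<Rightarrow> real"
  assumes "\<And>y. F differentiable at y"
  shows "((\<lambda>h. F (x + h *\<^sub>R e)) has_real_derivative partial F e (x + h *\<^sub>R e)) (at h)"
proof -
  let ?D = "frechet_derivative F (at (x + h *\<^sub>R e))"
  have dF: "(F has_derivative ?D) (at (x + h *\<^sub>R e))"
    using assms frechet_derivative_works by blast
  have "((\<lambda>h. x + h *\<^sub>R e) has_derivative (\<lambda>k. k *\<^sub>R e)) (at h)"
    by (auto intro!: derivative_eq_intros)
  from has_derivative_compose[OF this dF]
  have "((\<lambda>h. F (x + h *\<^sub>R e)) has_derivative (\<lambda>k. ?D (k *\<^sub>R e))) (at h)"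
    by (simp add: o_def)
  moreover have "(\<lambda>k. ?D (k *\<^sub>R e)) = (\<lambda>k. ?D e * k)"
    using linear_scale[OF has_derivative_linear[OF dF]] by (auto simp: mult.commute)
  ultimately show ?thesis by (simp add: has_field_derivative_def)
qed

lemma difference_quotient_LIMSEQ:
  fixes F :: "'a::euclidean_space \<Rightarrow> real"
  assumes "\<And>y. F differentiable at y"
  shows "(\<lambda>n. (F (x + inverse (real (Suc n)) *\<^sub>R e) - F x) / inverse (real (Suc n))) \<longlonglongrightarrow> partial F e x"
proof -
  have "((\<lambda>h. (F (x + (0 + h) *\<^sub>R e) - F (x + 0 *\<^sub>R e)) / h) \<longlongrightarrow> partial F e (x + 0 *\<^sub>R e)) (at 0)"
    using has_real_derivative_on_line[OF assms, of x e 0] unfolding DERIV_def .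
  then have lim: "((\<lambda>h. (F (x + h *\<^sub>R e) - F x) / h) \<longlongrightarrow> partial F e x) (at 0)" by simp
  have "(\<lambda>n. inverse (real (Suc n))) \<longlonglongrightarrow> 0" by (rule LIMSEQ_inverse_real_of_nat)
  then have "filterlim (\<lambda>n. inverse (real (Suc n))) (at 0) sequentially"
    unfolding filterlim_at by simp
  from filterlim_compose[OF lim this] show ?thesis by simp
qed

lemma difference_quotient_bound:
  fixes F :: "'a::euclidean_space \<Rightarrow> real"
  assumes d: "\<And>y. F differentiable at y" and M: "\<And>y. \<bar>partial F e y\<bar> \<le> M"
    and z: "\<And>x. x \<notin> C \<Longrightarrow> F x = 0" and R: "\<And>y. y \<in> C \<Longrightarrow> norm y \<le> R"
    and t: "0 < t" "t \<le> 1"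
  shows "\<bar>(F (x + t *\<^sub>R e) - F x) / t\<bar> \<le> M * indicator (cball 0 (R + norm e)) x"
proof (cases "F (x + t *\<^sub>R e) = F x")
  case False
  then have "x \<in> C \<or> x + t *\<^sub>R e \<in> C" using z by metis
  then have "norm x \<le> R + norm e"
  proof
    assume "x + t *\<^sub>R e \<in> C"
    then have "norm (x + t *\<^sub>R e) \<le> R" by (rule R)
    moreover have "norm x \<le> norm (x + t *\<^sub>R e) + norm (t *\<^sub>R e)"
      using norm_triangle_ineq4[of "x + t *\<^sub>R e" "t *\<^sub>R e"] by simp
    moreover have "norm (t *\<^sub>R e) \<le> norm e" using t by (simp add: mult_left_le_one_le)
    ultimately show ?thesis by linarith
  next
    assume "x \<in> C"
    then have "norm x \<le> R" by (rule R)
    then show ?thesis using norm_ge_zero[of e] by linarith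
  qed
  moreover obtain y where "F (x + t *\<^sub>R e) - F (x + 0 *\<^sub>R e) = (t - 0) * partial F e (x + y *\<^sub>R e)"
    using MVT2[of 0 t "\<lambda>h. F (x + h *\<^sub>R e)" "\<lambda>h. partial F e (x + h *\<^sub>R e)"]
      has_real_derivative_on_line[OF d] t(1) by blast
  ultimately show ?thesis using M[of "x + y *\<^sub>R e"] t(1) by simp
qed (use order_trans[OF abs_ge_zero M] in simp)

lemma lborel_integral_translate:
  fixes F :: "'a::euclidean_space \<Rightarrow> real"
  assumes "integrable lborel F"
  shows "integrable lborel (\<lambda>x. F (x + c))" "(\<integral>x. F (x + c) \<partial>lborel) = integral\<^sup>L lborel F"
proof -
  have [measurable]: "F \<in> borel_measurable borel" using borel_measurable_integrable[OF assms] by simp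
  have "integral\<^sup>L (distr lborel borel ((+) c)) F = integral\<^sup>L lborel (\<lambda>x. F (c + x))"
    by (rule integral_distr) auto
  then show "(\<integral>x. F (x + c) \<partial>lborel) = integral\<^sup>L lborel F"
    by (simp add: lborel_distr_plus add.commute)
  have "integrable (distr lborel borel ((+) c)) F = integrable lborel (\<lambda>x. F (c + x))"
    by (rule integrable_distr_eq) auto
  then show "integrable lborel (\<lambda>x. F (x + c))" using assms
    by (simp add: lborel_distr_plus add.commute)
qed

text \<open>The difference quotients in direction \<open>e\<close> have integral zero by translation invariance,
  and converge dominatedly to \<open>partial F e\<close>.\<close>

lemma integral_partial_eq_0:
  fixes F :: "'a::euclidean_space \<Rightarrow> real"
  assumes d: "\<And>x. F differentiable at x" and c: "continuous_on UNIV (partial F e)"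
    and C: "compact C" and z: "\<And>x. x \<notin> C \<Longrightarrow> F x = 0"
  shows "integral\<^sup>L lborel (partial F e) = 0"
proof -
  have "partial F e x = 0" if "x \<notin> C" for x
    using frechet_derivative_zero_on_open[of "-C" F x] C z that
    by (simp add: compact_imp_closed open_Compl)
  moreover obtain M where "M > 0" "\<And>y. y \<in> C \<Longrightarrow> norm (partial F e y) \<le> M"
    using compact_imp_bounded[OF compact_continuous_image[OF continuous_on_subset[OF c] C]]
    unfolding bounded_pos by auto
  ultimately have M_bound: "\<bar>partial F e y\<bar> \<le> M" for y
    by (cases "y \<in> C") auto
  obtain R where R: "\<And>y. y \<in> C \<Longrightarrow> norm y \<le> R"
    using compact_imp_bounded[OF C] unfolding bounded_iff by auto
  have F_int: "integrable lborel F"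
    using d C z by (intro integrable_continuous_compact_support)
      (auto simp: continuous_at_imp_continuous_on differentiable_imp_continuous_within)
  have [measurable]: "F \<in> borel_measurable borel" using borel_measurable_integrable[OF F_int] by simp
  define t where "t n = inverse (real (Suc n))" for n
  have t: "0 < t n" "t n \<le> 1" for n unfolding t_def by (auto simp: field_simps)
  define s where "s n x = (F (x + t n *\<^sub>R e) - F x) / t n" for n x
  have s_int: "integral\<^sup>L lborel (s n) = 0" for n
    using Bochner_Integration.integral_diff[OF lborel_integral_translate(1)[OF F_int] F_int, of "t n *\<^sub>R e"]
      lborel_integral_translate(2)[OF F_int]
    unfolding s_def by simp
  have s_bound: "norm (s n x) \<le> M * indicator (cball 0 (R + norm e)) x" for n x
    unfolding s_def using difference_quotient_bound[OF d M_bound z R t] by simp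
  have "(\<lambda>n. integral\<^sup>L lborel (s n)) \<longlonglongrightarrow> integral\<^sup>L lborel (partial F e)"
  proof (rule integral_dominated_convergence[where w="\<lambda>x. M * indicator (cball 0 (R + norm e)) x"])
    show "partial F e \<in> borel_measurable lborel"
      using c by (simp add: borel_measurable_continuous_onI)
    show "s n \<in> borel_measurable lborel" for n unfolding s_def by measurable
    show "integrable lborel (\<lambda>x. M * indicator (cball 0 (R + norm e)) x)"
      by (intro integrable_mult_right integrable_real_indicator)
        (auto simp: emeasure_compact_finite[OF compact_cball, simplified])
    show "AE x in lborel. (\<lambda>n. s n x) \<longlonglongrightarrow> partial F e x"
      using difference_quotient_LIMSEQ[OF d] by (simp add: s_def t_def)
  qed (use s_bound in auto)
  then show ?thesis using s_int by (simp add: LIMSEQ_const_iff)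
qed

lemma integration_by_parts:
  fixes f g :: "'a::euclidean_space \<Rightarrow> real"
  assumes f: "test_fun U f" and i: "i \<in> Basis"
    and g_diff: "\<And>x. g differentiable at x" and g_cont: "continuous_on UNIV (partial g i)"
  shows "(\<integral>x. partial f i x * g x \<partial>lborel) = - (\<integral>x. f x * partial g i x \<partial>lborel)"
proof -
  have f_diff: "\<And>x. f differentiable at x" using test_funD(1)[OF f] .
  have fc: "continuous_on UNIV f" "continuous_on UNIV (partial f i)" "compact (supp f)"
    using test_funD[OF f] i by auto
  have gc: "continuous_on UNIV g"
    using g_diff by (simp add: continuous_at_imp_continuous_on differentiable_imp_continuous_within)
  have product_rule: "partial (\<lambda>x. f x * g x) i = (\<lambda>x. partial f i x * g x + f x * partial g i x)"
    using frechet_derivative_mult[OF f_diff g_diff] by auto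
  have "integral\<^sup>L lborel (partial (\<lambda>x. f x * g x) i) = 0"
  proof (rule integral_partial_eq_0[OF _ _ fc(3)])
    show "(\<lambda>x. f x * g x) differentiable at x" for x
      using f_diff g_diff by (rule differentiable_mult)
    show "continuous_on UNIV (partial (\<lambda>x. f x * g x) i)"
      unfolding product_rule by (intro continuous_intros fc gc g_cont)
    show "f x * g x = 0" if "x \<notin> supp f" for x using outside_supp(1)[OF that] by simp
  qed
  then have "(\<integral>x. partial f i x * g x + f x * partial g i x \<partial>lborel) = 0"
    unfolding product_rule .
  moreover have "integrable lborel (\<lambda>x. partial f i x * g x)"
    by (rule integrable_continuous_compact_support[OF _ fc(3)])
      (use fc gc in \<open>auto intro!: continuous_intros dest!: outside_suppD\<close>)
  moreover have "integrable lborel (\<lambda>x. f x * partial g i x)"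
    by (rule integrable_continuous_compact_support[OF _ fc(3)])
      (use fc g_cont in \<open>auto intro!: continuous_intros dest!: outside_suppD\<close>)
  ultimately show ?thesis by simp
qed

lemma integral_cgrad_inner_eq_Laplacian:
  fixes f g :: "'a::euclidean_space \<Rightarrow> real"
  assumes f: "test_fun U f" and g: "test_fun V g"
  shows "(\<integral>x. cgrad f x \<bullet> cgrad g x \<partial>lborel)
     = - (\<integral>x. f x * (\<Sum>i\<in>Basis. partial (partial g i) i x) \<partial>lborel)"
proof -
  have fc: "compact (supp f)" using test_funD[OF f] by auto
  have int_Laplacian: "integrable lborel (\<lambda>x. f x * partial (partial g i) i x)" if "i \<in> Basis" for i
    by (rule integrable_continuous_compact_support[OF _ fc])
      (use test_funD[OF f] test_funD[OF g] that in \<open>auto intro!: continuous_intros dest!: outside_suppD\<close>)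
  have int_grad: "integrable lborel (\<lambda>x. partial f i x * partial g i x)" if "i \<in> Basis" for i
    by (rule integrable_continuous_compact_support[OF _ fc])
      (use test_funD[OF f] test_funD[OF g] that in \<open>auto intro!: continuous_intros dest!: outside_suppD\<close>)
  have "(\<integral>x. cgrad f x \<bullet> cgrad g x \<partial>lborel) = (\<integral>x. (\<Sum>i\<in>Basis. partial f i x * partial g i x) \<partial>lborel)"
    by (subst euclidean_inner) (simp add: cgrad_inner_Basis)
  also have "\<dots> = (\<Sum>i\<in>Basis. (\<integral>x. partial f i x * partial g i x \<partial>lborel))"
    by (rule Bochner_Integration.integral_sum) (use int_grad in auto)
  also have "\<dots> = (\<Sum>i\<in>Basis. - (\<integral>x. f x * partial (partial g i) i x \<partial>lborel))"
    by (intro sum.cong refl integration_by_parts[OF f]) (use test_funD[OF g] in auto)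
  also have "\<dots> = - (\<integral>x. (\<Sum>i\<in>Basis. f x * partial (partial g i) i x) \<partial>lborel)"
    by (subst Bochner_Integration.integral_sum) (use int_Laplacian in \<open>auto simp: sum_negf\<close>)
  finally show ?thesis by (simp add: sum_distrib_left)
qed

lemma integral_sq_eq_by_parts:
  fixes f :: "'a::euclidean_space \<Rightarrow> real"
  assumes f: "test_fun U f" and e: "e \<in> Basis"
  shows "(\<integral>x. (f x)\<^sup>2 \<partial>lborel) = - 2 * (\<integral>x. partial f e x * ((x \<bullet> e) * f x) \<partial>lborel)"
proof -
  define G where "G x = (x \<bullet> e) * f x" for x
  have f_diff: "\<And>x. f differentiable at x" using test_funD(1)[OF f] .
  have fc: "continuous_on UNIV f" "continuous_on UNIV (partial f e)" "compact (supp f)"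
    using test_funD[OF f] e by auto
  have G_deriv: "(G has_derivative (\<lambda>h. (x \<bullet> e) * frechet_derivative f (at x) h + (h \<bullet> e) * f x)) (at x)" for x
    unfolding G_def
    by (rule has_derivative_mult[OF has_derivative_inner_left[OF has_derivative_ident]
          frechet_derivative_works[THEN iffD1, OF f_diff]])
  then have G_diff: "G differentiable at x" for x unfolding differentiable_def by blast
  have G_partial: "partial G e x = f x + (x \<bullet> e) * partial f e x" for x
    using fun_cong[OF frechet_derivative_at[OF G_deriv[of x]], of e] e by simp
  have "(\<integral>x. partial f e x * G x \<partial>lborel) = - (\<integral>x. f x * partial G e x \<partial>lborel)"
    by (rule integration_by_parts[OF f e G_diff]) (simp add: G_partial continuous_intros fc)
  also have "(\<lambda>x. f x * partial G e x) = (\<lambda>x. (f x)\<^sup>2 + partial f e x * G x)"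
    by (auto simp: G_partial G_def algebra_simps power2_eq_square)
  also have "(\<integral>x. (f x)\<^sup>2 + partial f e x * G x \<partial>lborel)
      = (\<integral>x. (f x)\<^sup>2 \<partial>lborel) + (\<integral>x. partial f e x * G x \<partial>lborel)"
  proof (rule Bochner_Integration.integral_add)
    show "integrable lborel (\<lambda>x. (f x)\<^sup>2)"
      using test_fun_square_integrable(1)[OF f] by (simp add: square_integrable_def)
    show "integrable lborel (\<lambda>x. partial f e x * G x)"
      by (rule integrable_continuous_compact_support[OF _ fc(3)])
        (use fc in \<open>auto intro!: continuous_intros dest!: outside_suppD simp: G_def\<close>)
  qed
  finally show ?thesis unfolding G_def by linarith
qed

lemma le_sq_of_le_mult_sqrt:
  fixes A B R :: real
  assumes "0 \<le> A" "0 \<le> B" "A \<le> 2 * R * sqrt A * sqrt B"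
  shows "A \<le> 4 * R\<^sup>2 * B"
proof (cases "A = 0")
  case True then show ?thesis using assms(2) by simp
next
  case False
  then have pos: "0 < sqrt A" using assms(1) by simp
  have "sqrt A * sqrt A \<le> sqrt A * (2 * R * sqrt B)"
    using assms(1,3) by (simp add: mult_ac)
  then have le: "sqrt A \<le> 2 * R * sqrt B" using pos by (rule mult_left_le_imp_le)
  have "A = (sqrt A)\<^sup>2" using assms(1) by simp
  also have "\<dots> \<le> (2 * R * sqrt B)\<^sup>2" using le pos by (intro power_mono) auto
  also have "\<dots> = 4 * R\<^sup>2 * B" using assms(2) by (simp add: power_mult_distrib)
  finally show ?thesis .
qed

lemma L2_sqnorm_coordinate_mult_le:
  fixes f :: "'a::euclidean_space \<Rightarrow> real"
  assumes f: "test_fun U f" and U: "U \<subseteq> cball 0 R" and e: "e \<in> Basis"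
  shows "square_integrable (\<lambda>x. (x \<bullet> e) * f x)" "L2_sqnorm (\<lambda>x. (x \<bullet> e) * f x) \<le> R\<^sup>2 * L2_sqnorm f"
proof -
  have fc: "continuous_on UNIV f" "compact (supp f)" using test_funD[OF f] by auto
  show G_sq: "square_integrable (\<lambda>x. (x \<bullet> e) * f x)"
    by (rule square_integrable_continuous_compact_support[OF _ fc(2)])
      (use fc in \<open>auto intro!: continuous_intros dest!: outside_suppD\<close>)
  have "(norm ((x \<bullet> e) * f x))\<^sup>2 \<le> R\<^sup>2 * (norm (f x))\<^sup>2" for x
  proof (cases "x \<in> supp f")
    case True
    then have "norm x \<le> R" using U test_funD(7)[OF f] by auto
    then have "\<bar>x \<bullet> e\<bar> \<le> R" using Basis_le_norm[OF e, of x] by linarith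
    then have "(x \<bullet> e)\<^sup>2 \<le> R\<^sup>2" by (metis abs_ge_zero power2_abs power_mono)
    then show ?thesis by (simp add: power_mult_distrib mult_right_mono)
  next
    case False
    then show ?thesis by (simp add: outside_supp(1)[OF False])
  qed
  then have "L2_sqnorm (\<lambda>x. (x \<bullet> e) * f x) \<le> (\<integral>x. R\<^sup>2 * (norm (f x))\<^sup>2 \<partial>lborel)"
    unfolding L2_sqnorm_def
    by (intro integral_mono) (use G_sq test_fun_square_integrable(1)[OF f] in
      \<open>simp_all add: square_integrable_def\<close>)
  then show "L2_sqnorm (\<lambda>x. (x \<bullet> e) * f x) \<le> R\<^sup>2 * L2_sqnorm f"
    unfolding L2_sqnorm_def by simp
qed

lemma L2_sqnorm_partial_le:
  fixes f :: "'a::euclidean_space \<Rightarrow> real"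
  assumes f: "test_fun U f" and e: "e \<in> Basis"
  shows "square_integrable (partial f e)" "L2_sqnorm (partial f e) \<le> L2_sqnorm (cgrad f)"
proof -
  have fc: "continuous_on UNIV (partial f e)" "compact (supp f)" using test_funD[OF f] e by auto
  show partial_sq: "square_integrable (partial f e)"
    by (rule square_integrable_continuous_compact_support[OF fc])
      (auto dest!: outside_suppD)
  show "L2_sqnorm (partial f e) \<le> L2_sqnorm (cgrad f)"
    unfolding L2_sqnorm_def
  proof (rule integral_mono)
    show "integrable lborel (\<lambda>x. (norm (partial f e x))\<^sup>2)" "integrable lborel (\<lambda>x. (norm (cgrad f x))\<^sup>2)"
      using partial_sq test_fun_square_integrable(2)[OF f] by (simp_all add: square_integrable_def)
    show "(norm (partial f e x))\<^sup>2 \<le> (norm (cgrad f x))\<^sup>2" for x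
      unfolding norm_cgrad_sq using member_le_sum[OF e, of "\<lambda>i. (partial f i x)\<^sup>2"] by simp
  qed
qed

lemma Poincare_inequality:
  fixes f :: "'a::euclidean_space \<Rightarrow> real"
  assumes f: "test_fun U f" and U: "U \<subseteq> cball 0 R" and R: "0 \<le> R"
  shows "L2_sqnorm f \<le> 4 * R\<^sup>2 * L2_sqnorm (cgrad f)"
proof -
  obtain e :: 'a where e: "e \<in> Basis" using nonempty_Basis by blast
  define G where "G x = (x \<bullet> e) * f x" for x
  have G: "square_integrable G" "L2_sqnorm G \<le> R\<^sup>2 * L2_sqnorm f"
    unfolding G_def by (rule L2_sqnorm_coordinate_mult_le[OF f U e])+
  note partial = L2_sqnorm_partial_le[OF f e]
  have CS: "\<bar>\<integral>x. partial f e x * G x \<partial>lborel\<bar> \<le> sqrt (L2_sqnorm (partial f e)) * sqrt (L2_sqnorm G)"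
    using L2_Cauchy_Schwarz[OF partial(1) G(1)] by simp
  have "L2_sqnorm f = (\<integral>x. (f x)\<^sup>2 \<partial>lborel)" unfolding L2_sqnorm_def by simp
  also have "\<dots> = - 2 * (\<integral>x. partial f e x * G x \<partial>lborel)"
    unfolding G_def by (rule integral_sq_eq_by_parts[OF f e])
  also have "\<dots> \<le> 2 * (sqrt (L2_sqnorm (partial f e)) * sqrt (L2_sqnorm G))"
    using CS abs_ge_minus_self[of "\<integral>x. partial f e x * G x \<partial>lborel"] by linarith
  also have "\<dots> \<le> 2 * (sqrt (L2_sqnorm (cgrad f)) * sqrt (R\<^sup>2 * L2_sqnorm f))"
    using mult_mono[OF real_sqrt_le_mono[OF partial(2)] real_sqrt_le_mono[OF G(2)]]
    by (simp add: L2_sqnorm_nonneg)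
  also have "\<dots> = 2 * R * sqrt (L2_sqnorm f) * sqrt (L2_sqnorm (cgrad f))"
    using R by (simp add: real_sqrt_mult)
  finally show ?thesis
    by (rule le_sq_of_le_mult_sqrt[OF L2_sqnorm_nonneg L2_sqnorm_nonneg])
qed

section \<open>Approximation by test functions and the weak gradient\<close>

definition test_approx ::
    "'a::euclidean_space set \<Rightarrow> ('a \<Rightarrow> real) \<Rightarrow> ('a \<Rightarrow> 'a) \<Rightarrow> (nat \<Rightarrow> 'a \<Rightarrow> real) \<Rightarrow> bool" where
  "test_approx U u g \<phi> \<longleftrightarrow> (\<forall>n. test_fun U (\<phi> n)) \<and> square_integrable u \<and> square_integrable g \<and>
     (\<lambda>n. L2_sqnorm (\<lambda>x. \<phi> n x - u x)) \<longlonglongrightarrow> 0 \<and> (\<lambda>n. L2_sqnorm (\<lambda>x. cgrad (\<phi> n) x - g x)) \<longlonglongrightarrow> 0"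

lemma nn_integral_norm_sq_tendsto_0_iff:
  fixes h :: "nat \<Rightarrow> 'a::euclidean_space \<Rightarrow> 'b::euclidean_space"
  assumes "\<And>n. square_integrable (h n)"
  shows "((\<lambda>n. \<integral>\<^sup>+x. ennreal ((norm (h n x))\<^sup>2) \<partial>lborel) \<longlonglongrightarrow> 0) \<longleftrightarrow> ((\<lambda>n. L2_sqnorm (h n)) \<longlonglongrightarrow> 0)"
proof -
  have "((\<lambda>n. \<integral>\<^sup>+x. ennreal ((norm (h n x))\<^sup>2) \<partial>lborel) \<longlonglongrightarrow> 0) \<longleftrightarrow>
        ((\<lambda>n. ennreal (L2_sqnorm (h n))) \<longlonglongrightarrow> ennreal 0)"
    using nn_integral_norm_sq[OF assms] by simp
  also have "\<dots> \<longleftrightarrow> ((\<lambda>n. L2_sqnorm (h n)) \<longlonglongrightarrow> 0)"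
    by (rule tendsto_ennreal_iff) (auto simp: L2_sqnorm_nonneg)
  finally show ?thesis .
qed

lemma square_integrableI_nn_integral:
  fixes h :: "'a::euclidean_space \<Rightarrow> 'b::euclidean_space"
  assumes "h \<in> borel_measurable lborel" and "(\<integral>\<^sup>+x. ennreal ((norm (h x))\<^sup>2) \<partial>lborel) < \<infinity>"
  shows "square_integrable h"
  unfolding square_integrable_def
proof
  show "h \<in> borel_measurable lborel" by (rule assms(1))
  have [measurable]: "h \<in> borel_measurable borel" using assms(1) by simp
  show "integrable lborel (\<lambda>x. (norm (h x))\<^sup>2)"
    by (rule integrableI_nonneg) (use assms(2) in auto)
qed

lemma nn_integral_tendsto_0_imp_square_integrable:
  fixes h :: "nat \<Rightarrow> 'a::euclidean_space \<Rightarrow> 'b::euclidean_space"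
  assumes "\<And>n. h n \<in> borel_measurable lborel"
    and "(\<lambda>n. \<integral>\<^sup>+x. ennreal ((norm (h n x))\<^sup>2) \<partial>lborel) \<longlonglongrightarrow> 0"
  shows "\<exists>n. square_integrable (h n)"
proof -
  obtain N where "(\<integral>\<^sup>+x. ennreal ((norm (h N x))\<^sup>2) \<partial>lborel) < 1"
    using order_tendstoD(2)[OF assms(2), of 1] unfolding eventually_sequentially by auto
  then have "(\<integral>\<^sup>+x. ennreal ((norm (h N x))\<^sup>2) \<partial>lborel) < \<infinity>"
    using ennreal_one_less_top by (simp add: order.strict_trans)
  then show ?thesis using square_integrableI_nn_integral[OF assms(1)] by blast
qed

lemma H10_grad_test_approx:
  fixes u :: "'a::euclidean_space \<Rightarrow> real"
  assumes "H10_grad U u g"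
  obtains \<phi> where "test_approx U u g \<phi>"
proof -
  obtain \<phi> where um: "u \<in> borel_measurable lborel" and gm: "g \<in> borel_measurable lborel"
    and \<phi>: "\<forall>n. test_fun U (\<phi> n)"
    and lim_fun: "(\<lambda>n. \<integral>\<^sup>+ x. ennreal ((norm (\<phi> n x - u x))\<^sup>2) \<partial>lborel) \<longlonglongrightarrow> 0"
    and lim_grad: "(\<lambda>n. \<integral>\<^sup>+ x. ennreal ((norm (cgrad (\<phi> n) x - g x))\<^sup>2) \<partial>lborel) \<longlonglongrightarrow> 0"
    using assms unfolding H10_grad_def by auto
  have \<phi>_sq: "square_integrable (\<phi> n)" "square_integrable (cgrad (\<phi> n))" for n
    using test_fun_square_integrable \<phi> by blast+
  have "(\<lambda>x. \<phi> n x - u x) \<in> borel_measurable lborel" for n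
    using \<phi>_sq(1)[of n] um by (intro borel_measurable_diff) (auto simp: square_integrable_def)
  then obtain n1 where "square_integrable (\<lambda>x. \<phi> n1 x - u x)"
    using nn_integral_tendsto_0_imp_square_integrable[OF _ lim_fun] by blast
  from square_integrable_diff[OF \<phi>_sq(1)[of n1] this] have u: "square_integrable u" by simp
  have "(\<lambda>x. cgrad (\<phi> n) x - g x) \<in> borel_measurable lborel" for n
    using \<phi>_sq(2)[of n] gm by (intro borel_measurable_diff) (auto simp: square_integrable_def)
  then obtain n2 where "square_integrable (\<lambda>x. cgrad (\<phi> n2) x - g x)"
    using nn_integral_tendsto_0_imp_square_integrable[OF _ lim_grad] by blast
  from square_integrable_diff[OF \<phi>_sq(2)[of n2] this] have g: "square_integrable g" by simp
  have "test_approx U u g \<phi>"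
    unfolding test_approx_def
    using \<phi> u g lim_fun lim_grad
      nn_integral_norm_sq_tendsto_0_iff[OF square_integrable_diff[OF \<phi>_sq(1) u]]
      nn_integral_norm_sq_tendsto_0_iff[OF square_integrable_diff[OF \<phi>_sq(2) g]]
    by simp
  then show ?thesis by (rule that)
qed

lemma test_approx_H10_grad:
  fixes u :: "'a::euclidean_space \<Rightarrow> real"
  assumes "test_approx U u g \<phi>"
  shows "H10_grad U u g"
proof -
  have \<phi>: "\<forall>n. test_fun U (\<phi> n)" and u: "square_integrable u" and g: "square_integrable g"
    and "(\<lambda>n. L2_sqnorm (\<lambda>x. \<phi> n x - u x)) \<longlonglongrightarrow> 0"
    and "(\<lambda>n. L2_sqnorm (\<lambda>x. cgrad (\<phi> n) x - g x)) \<longlonglongrightarrow> 0"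
    using assms unfolding test_approx_def by auto
  moreover have "square_integrable (\<phi> n)" "square_integrable (cgrad (\<phi> n))" for n
    using test_fun_square_integrable \<phi> by blast+
  then have d1: "\<And>n. square_integrable (\<lambda>x. \<phi> n x - u x)"
    and d2: "\<And>n. square_integrable (\<lambda>x. cgrad (\<phi> n) x - g x)"
    using u g by (auto intro: square_integrable_diff)
  ultimately show ?thesis
    unfolding H10_grad_def
    using nn_integral_norm_sq_tendsto_0_iff[OF d1] nn_integral_norm_sq_tendsto_0_iff[OF d2]
    by (auto simp: square_integrable_def)
qed

lemma test_approx_lincomb:
  fixes u v :: "'a::euclidean_space \<Rightarrow> real"
  assumes A: "test_approx U u g \<phi>" and B: "test_approx U v h \<psi>"
  shows "test_approx U (\<lambda>x. a * u x + b * v x) (\<lambda>x. a *\<^sub>R g x + b *\<^sub>R h x) (\<lambda>n x. a * \<phi> n x + b * \<psi> n x)"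
proof -
  have \<phi>: "\<And>n. test_fun U (\<phi> n)" and u: "square_integrable u" and g: "square_integrable g"
    and \<phi>_fun: "(\<lambda>n. L2_sqnorm (\<lambda>x. \<phi> n x - u x)) \<longlonglongrightarrow> 0"
    and \<phi>_grad: "(\<lambda>n. L2_sqnorm (\<lambda>x. cgrad (\<phi> n) x - g x)) \<longlonglongrightarrow> 0"
    using A unfolding test_approx_def by auto
  have \<psi>: "\<And>n. test_fun U (\<psi> n)" and v: "square_integrable v" and h: "square_integrable h"
    and \<psi>_fun: "(\<lambda>n. L2_sqnorm (\<lambda>x. \<psi> n x - v x)) \<longlonglongrightarrow> 0"
    and \<psi>_grad: "(\<lambda>n. L2_sqnorm (\<lambda>x. cgrad (\<psi> n) x - h x)) \<longlonglongrightarrow> 0"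
    using B unfolding test_approx_def by auto
  have sq: "square_integrable (\<phi> n)" "square_integrable (cgrad (\<phi> n))"
    "square_integrable (\<psi> n)" "square_integrable (cgrad (\<psi> n))" for n
    using test_fun_square_integrable \<phi> \<psi> by blast+
  have "(\<lambda>n. L2_sqnorm (\<lambda>x. a *\<^sub>R (\<phi> n x - u x) + b *\<^sub>R (\<psi> n x - v x))) \<longlonglongrightarrow> 0"
    by (rule L2_sqnorm_lincomb_tendsto_0[OF square_integrable_diff[OF sq(1) u]
          square_integrable_diff[OF sq(3) v] \<phi>_fun \<psi>_fun])
  moreover have "(\<lambda>n. L2_sqnorm (\<lambda>x. a *\<^sub>R (cgrad (\<phi> n) x - g x) + b *\<^sub>R (cgrad (\<psi> n) x - h x))) \<longlonglongrightarrow> 0"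
    by (rule L2_sqnorm_lincomb_tendsto_0[OF square_integrable_diff[OF sq(2) g]
          square_integrable_diff[OF sq(4) h] \<phi>_grad \<psi>_grad])
  moreover have "square_integrable (\<lambda>x. a * u x + b * v x)"
    using square_integrable_add[OF square_integrable_scaleR[OF u, of a] square_integrable_scaleR[OF v, of b]]
    by simp
  moreover have "square_integrable (\<lambda>x. a *\<^sub>R g x + b *\<^sub>R h x)"
    by (rule square_integrable_add[OF square_integrable_scaleR[OF g] square_integrable_scaleR[OF h]])
  moreover have "(a * \<phi> n x + b * \<psi> n x) - (a * u x + b * v x)
      = a *\<^sub>R (\<phi> n x - u x) + b *\<^sub>R (\<psi> n x - v x)" for n x
    by (simp add: algebra_simps)
  moreover have "cgrad (\<lambda>x. a * \<phi> n x + b * \<psi> n x) x - (a *\<^sub>R g x + b *\<^sub>R h x)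
      = a *\<^sub>R (cgrad (\<phi> n) x - g x) + b *\<^sub>R (cgrad (\<psi> n) x - h x)" for n x
    unfolding cgrad_lincomb[OF \<phi> \<psi>] by (simp add: algebra_simps)
  ultimately show ?thesis
    unfolding test_approx_def using test_fun_lincomb[OF \<phi> \<psi>] by presburger
qed

lemma test_approx_mono: "test_approx U u g \<phi> \<Longrightarrow> U \<subseteq> V \<Longrightarrow> test_approx V u g \<phi>"
  unfolding test_approx_def using test_fun_mono by blast

text \<open>By integration by parts \<open>h\<close> is \<open>L\<^sup>2\<close>-orthogonal to every \<open>cgrad (\<eta> m)\<close>; being their limit,
  it has norm zero.\<close>

lemma test_approx_zero_grad_eq_0:
  fixes \<eta> :: "nat \<Rightarrow> 'a::euclidean_space \<Rightarrow> real"
  assumes "test_approx UNIV (\<lambda>x. 0) h \<eta>"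
  shows "AE x in lborel. h x = 0"
proof -
  have \<eta>: "\<And>n. test_fun UNIV (\<eta> n)" and h: "square_integrable h"
    and fun_lim: "(\<lambda>n. L2_sqnorm (\<eta> n)) \<longlonglongrightarrow> 0"
    and grad_lim: "(\<lambda>n. L2_sqnorm (\<lambda>x. cgrad (\<eta> n) x - h x)) \<longlonglongrightarrow> 0"
    using assms unfolding test_approx_def by auto
  have sq: "square_integrable (\<eta> n)" "square_integrable (cgrad (\<eta> n))" for n
    using test_fun_square_integrable \<eta> by blast+
  define Lap where "Lap m x = (\<Sum>i\<in>Basis. partial (partial (\<eta> m) i) i x)" for m x
  have Lap_sq: "square_integrable (Lap m)" for m
  proof -
    have "compact (supp (\<eta> m))" using test_funD[OF \<eta>] by blast
    then show ?thesis unfolding Lap_def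
      by (rule square_integrable_continuous_compact_support[rotated])
        (use test_funD[OF \<eta>[of m]] in \<open>auto intro!: continuous_intros dest!: outside_suppD\<close>)
  qed
  have orth: "(\<integral>x. h x \<bullet> cgrad (\<eta> m) x \<partial>lborel) = 0" for m
  proof -
    have "(\<lambda>n. sqrt (L2_sqnorm (\<eta> n)) * sqrt (L2_sqnorm (Lap m))) \<longlonglongrightarrow> sqrt 0 * sqrt (L2_sqnorm (Lap m))"
      by (intro tendsto_intros fun_lim)
    then have bound_lim: "(\<lambda>n. sqrt (L2_sqnorm (\<eta> n)) * sqrt (L2_sqnorm (Lap m))) \<longlonglongrightarrow> 0" by simp
    have "\<bar>\<integral>x. \<eta> n x * Lap m x \<partial>lborel\<bar> \<le> sqrt (L2_sqnorm (\<eta> n)) * sqrt (L2_sqnorm (Lap m))" for n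
      using L2_Cauchy_Schwarz[OF sq(1) Lap_sq] by simp
    then have "(\<lambda>n. \<integral>x. \<eta> n x * Lap m x \<partial>lborel) \<longlonglongrightarrow> 0"
      by (intro Lim_null_comparison[OF _ bound_lim]) simp
    from tendsto_minus[OF this] have lim0: "(\<lambda>n. \<integral>x. cgrad (\<eta> n) x \<bullet> cgrad (\<eta> m) x \<partial>lborel) \<longlonglongrightarrow> 0"
      unfolding Lap_def integral_cgrad_inner_eq_Laplacian[OF \<eta> \<eta>] by simp
    have "(\<lambda>n. \<integral>x. cgrad (\<eta> n) x \<bullet> cgrad (\<eta> m) x \<partial>lborel) \<longlonglongrightarrow> (\<integral>x. h x \<bullet> cgrad (\<eta> m) x \<partial>lborel)"
      by (rule tendsto_integral_inner[OF sq(2) h sq(2) sq(2) grad_lim]) (simp add: L2_sqnorm_def)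
    from LIMSEQ_unique[OF this lim0] show ?thesis .
  qed
  have "(\<lambda>m. \<integral>x. h x \<bullet> cgrad (\<eta> m) x \<partial>lborel) \<longlonglongrightarrow> (\<integral>x. h x \<bullet> h x \<partial>lborel)"
    by (rule tendsto_integral_inner[OF h h sq(2) h _ grad_lim]) (simp add: L2_sqnorm_def)
  then have "L2_sqnorm h = 0" using orth by (simp add: LIMSEQ_const_iff L2_sqnorm_eq_integral_inner)
  then show ?thesis by (rule L2_sqnorm_eq_0_AE[OF h])
qed

lemma test_approx_grad_unique:
  fixes u :: "'a::euclidean_space \<Rightarrow> real"
  assumes "test_approx U u g \<phi>" and "test_approx V u g' \<psi>"
  shows "AE x in lborel. g x = g' x"
proof -
  have "test_approx UNIV u g \<phi>" "test_approx UNIV u g' \<psi>"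
    using assms by (auto intro: test_approx_mono)
  from test_approx_lincomb[OF this, of 1 "-1"]
  have "test_approx UNIV (\<lambda>x. 0) (\<lambda>x. g x - g' x) (\<lambda>n x. \<phi> n x - \<psi> n x)" by simp
  from test_approx_zero_grad_eq_0[OF this] show ?thesis by simp
qed

lemma L2_limit_vanishes_outside:
  fixes w :: "'a::euclidean_space \<Rightarrow> 'b::euclidean_space"
  assumes w: "square_integrable w" and q: "\<And>n. square_integrable (q n)"
    and lim: "(\<lambda>n. L2_sqnorm (\<lambda>x. q n x - w x)) \<longlonglongrightarrow> 0"
    and S: "S \<in> sets borel" and q0: "\<And>n x. x \<notin> S \<Longrightarrow> q n x = 0"
  shows "AE x in lborel. x \<notin> S \<longrightarrow> w x = 0"
proof -
  define v where "v x = indicator (-S) x *\<^sub>R w x" for x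
  have [measurable]: "w \<in> borel_measurable borel" using w by (simp add: square_integrable_def)
  have [measurable]: "-S \<in> sets borel" using S by auto
  have v_meas: "v \<in> borel_measurable borel" unfolding v_def by measurable
  have v_pointwise: "(norm (v x))\<^sup>2 \<le> (norm (q n x - w x))\<^sup>2" for n x
    by (cases "x \<in> S") (auto simp: v_def q0)
  have v: "square_integrable v"
    unfolding square_integrable_def
  proof
    show "v \<in> borel_measurable lborel" using v_meas by simp
    show "integrable lborel (\<lambda>x. (norm (v x))\<^sup>2)"
    proof (rule Bochner_Integration.integrable_bound)
      show "integrable lborel (\<lambda>x. (norm (w x))\<^sup>2)" using w by (simp add: square_integrable_def)
      show "(\<lambda>x. (norm (v x))\<^sup>2) \<in> borel_measurable lborel" using v_meas by measurable
      show "AE x in lborel. norm ((norm (v x))\<^sup>2) \<le> norm ((norm (w x))\<^sup>2)"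
        by (rule AE_I2) (simp add: v_def indicator_def)
    qed
  qed
  have "L2_sqnorm v \<le> L2_sqnorm (\<lambda>x. q n x - w x)" for n
    unfolding L2_sqnorm_def
    by (rule integral_mono) (use v square_integrable_diff[OF q w] v_pointwise in
      \<open>simp_all add: square_integrable_def\<close>)
  then have "L2_sqnorm v \<le> 0" by (intro LIMSEQ_le_const[OF lim]) auto
  then have "L2_sqnorm v = 0" using L2_sqnorm_nonneg[of v] by simp
  from L2_sqnorm_eq_0_AE[OF v this] show ?thesis
    by eventually_elim (auto simp: v_def)
qed

lemma test_approx_vanish_outside:
  fixes u :: "'a::euclidean_space \<Rightarrow> real"
  assumes "test_approx U u g \<phi>"
  shows "AE x in lborel. x \<notin> U \<longrightarrow> u x = 0" "AE x in lborel. x \<notin> U \<longrightarrow> g x = 0"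
proof -
  have \<phi>: "\<And>n. test_fun U (\<phi> n)" and u: "square_integrable u" and g: "square_integrable g"
    and fun_lim: "(\<lambda>n. L2_sqnorm (\<lambda>x. \<phi> n x - u x)) \<longlonglongrightarrow> 0"
    and grad_lim: "(\<lambda>n. L2_sqnorm (\<lambda>x. cgrad (\<phi> n) x - g x)) \<longlonglongrightarrow> 0"
    using assms unfolding test_approx_def by auto
  have sq: "square_integrable (\<phi> n)" "square_integrable (cgrad (\<phi> n))" for n
    using test_fun_square_integrable \<phi> by blast+
  define S where "S = (\<Union>n. supp (\<phi> n))"
  have SU: "S \<subseteq> U" unfolding S_def using test_funD(7)[OF \<phi>] by blast
  have S: "S \<in> sets borel" unfolding S_def by (rule sets.countable_UN''[of UNIV]) auto
  have "AE x in lborel. x \<notin> S \<longrightarrow> u x = 0"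
    by (rule L2_limit_vanishes_outside[OF u sq(1) fun_lim S]) (use outside_supp(1) in \<open>auto simp: S_def\<close>)
  then show "AE x in lborel. x \<notin> U \<longrightarrow> u x = 0" using SU by (auto elim!: AE_mp)
  have "AE x in lborel. x \<notin> S \<longrightarrow> g x = 0"
    by (rule L2_limit_vanishes_outside[OF g sq(2) grad_lim S]) (use cgrad_outside_supp in \<open>auto simp: S_def\<close>)
  then show "AE x in lborel. x \<notin> U \<longrightarrow> g x = 0" using SU by (auto elim!: AE_mp)
qed

lemma wgrad_AE:
  fixes u :: "'a::euclidean_space \<Rightarrow> real"
  assumes "H10_grad U u g"
  shows "AE x in lborel. wgrad u x = g x" "H10_grad UNIV u (wgrad u)"
proof -
  obtain \<phi> where \<phi>: "test_approx U u g \<phi>" using H10_grad_test_approx[OF assms] .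
  have "H10_grad UNIV u g" using test_approx_H10_grad[OF test_approx_mono[OF \<phi>]] by simp
  then show W: "H10_grad UNIV u (wgrad u)" unfolding wgrad_def by (rule someI[of "H10_grad UNIV u"])
  obtain \<psi> where "test_approx UNIV u (wgrad u) \<psi>" using H10_grad_test_approx[OF W] .
  then show "AE x in lborel. wgrad u x = g x" using \<phi> by (rule test_approx_grad_unique)
qed

lemma H10_grad_lincomb:
  fixes u v :: "'a::euclidean_space \<Rightarrow> real"
  assumes "H10_grad U u g" "H10_grad U v h"
  shows "H10_grad U (\<lambda>x. a * u x + b * v x) (\<lambda>x. a *\<^sub>R g x + b *\<^sub>R h x)"
proof -
  obtain \<phi> where \<phi>: "test_approx U u g \<phi>" using H10_grad_test_approx[OF assms(1)] .
  obtain \<psi> where \<psi>: "test_approx U v h \<psi>" using H10_grad_test_approx[OF assms(2)] .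
  show ?thesis by (rule test_approx_H10_grad[OF test_approx_lincomb[OF \<phi> \<psi>]])
qed

lemma H10_grad_mono:
  assumes "H10_grad U u g" "U \<subseteq> V"
  shows "H10_grad V u g"
proof -
  obtain \<phi> where "test_approx U u g \<phi>" using H10_grad_test_approx[OF assms(1)] .
  from test_approx_H10_grad[OF test_approx_mono[OF this assms(2)]] show ?thesis .
qed

lemma H10_gradD:
  fixes u :: "'a::euclidean_space \<Rightarrow> real"
  assumes "H10_grad U u g"
  shows "square_integrable u" "square_integrable g"
    "AE x in lborel. x \<notin> U \<longrightarrow> u x = 0" "AE x in lborel. x \<notin> U \<longrightarrow> g x = 0"
proof -
  obtain \<phi> where \<phi>: "test_approx U u g \<phi>" using H10_grad_test_approx[OF assms] .
  then show "square_integrable u" "square_integrable g" unfolding test_approx_def by auto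
  show "AE x in lborel. x \<notin> U \<longrightarrow> u x = 0" "AE x in lborel. x \<notin> U \<longrightarrow> g x = 0"
    using test_approx_vanish_outside[OF \<phi>] by auto
qed

lemma H10_grad_cong_AE:
  assumes "H10_grad U u g" "g' \<in> borel_measurable lborel" "AE x in lborel. g x = g' x"
  shows "H10_grad U u g'"
proof -
  have "(\<integral>\<^sup>+x. ennreal ((norm (cgrad \<phi> x - g x))\<^sup>2) \<partial>lborel)
      = (\<integral>\<^sup>+x. ennreal ((norm (cgrad \<phi> x - g' x))\<^sup>2) \<partial>lborel)" for \<phi>
    by (rule nn_integral_cong_AE) (use assms(3) in auto)
  then show ?thesis using assms(1,2) unfolding H10_grad_def by simp
qed

lemma set_integral_eq_integral_AE:
  fixes f F :: "'a::euclidean_space \<Rightarrow> real"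
  assumes A: "A \<in> sets borel" and F0: "AE x in lborel. x \<notin> A \<longrightarrow> F x = 0"
    and eq: "AE x in lborel. f x = F x"
    and f: "f \<in> borel_measurable borel" and F: "F \<in> borel_measurable borel"
  shows "(LINT x:A|lborel. f x) = (\<integral>x. F x \<partial>lborel)"
  unfolding set_lebesgue_integral_def
proof (rule integral_cong_AE)
  show "(\<lambda>x. indicator A x *\<^sub>R f x) \<in> borel_measurable lborel" using A f by simp
  show "F \<in> borel_measurable lborel" using F by simp
  show "AE x in lborel. indicator A x *\<^sub>R f x = F x"
    using F0 eq by eventually_elim (auto simp: indicator_def)
qed

lemma set_integral_wgrad_inner:
  fixes u v :: "'a::euclidean_space \<Rightarrow> real"
  assumes u: "H10_grad U u g" and v: "H10_grad U v h" and U: "U \<in> sets borel"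
  shows "(LINT x:U|lborel. wgrad u x \<bullet> wgrad v x) = (\<integral>x. g x \<bullet> h x \<partial>lborel)"
proof (rule set_integral_eq_integral_AE[OF U])
  show "AE x in lborel. x \<notin> U \<longrightarrow> g x \<bullet> h x = 0"
    using H10_gradD(4)[OF u] by eventually_elim auto
  show "AE x in lborel. wgrad u x \<bullet> wgrad v x = g x \<bullet> h x"
    using wgrad_AE(1)[OF u] wgrad_AE(1)[OF v] by eventually_elim auto
  have [measurable]: "wgrad u \<in> borel_measurable borel" "wgrad v \<in> borel_measurable borel"
    "g \<in> borel_measurable borel" "h \<in> borel_measurable borel"
    using H10_gradD(2)[OF wgrad_AE(2)[OF u]] H10_gradD(2)[OF wgrad_AE(2)[OF v]]
      H10_gradD(2)[OF u] H10_gradD(2)[OF v] by (simp_all add: square_integrable_def)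
  show "(\<lambda>x. wgrad u x \<bullet> wgrad v x) \<in> borel_measurable borel" by measurable
  show "(\<lambda>x. g x \<bullet> h x) \<in> borel_measurable borel" by measurable
qed

lemma set_integral_mult_H10:
  fixes u v :: "'a::euclidean_space \<Rightarrow> real"
  assumes u: "H10_grad U u g" and v: "square_integrable v" and U: "U \<in> sets borel"
  shows "(LINT x:U|lborel. u x * v x) = (\<integral>x. u x * v x \<partial>lborel)"
proof -
  have [measurable]: "u \<in> borel_measurable borel" "v \<in> borel_measurable borel"
    using H10_gradD(1)[OF u] v by (simp_all add: square_integrable_def)
  have m: "(\<lambda>x. u x * v x) \<in> borel_measurable borel" by measurable
  have "AE x in lborel. x \<notin> U \<longrightarrow> u x * v x = 0"
    using H10_gradD(3)[OF u] by eventually_elim auto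
  from set_integral_eq_integral_AE[OF U this _ m m] show ?thesis by simp
qed

lemma set_integral_norm_wgrad_sq:
  fixes f :: "'a::euclidean_space \<Rightarrow> real"
  assumes "H10_grad U f g" and "U \<in> sets borel"
  shows "(LINT x:U|lborel. (norm (wgrad f x))\<^sup>2) = L2_sqnorm g"
  using set_integral_wgrad_inner[OF assms(1,1,2)]
  by (simp add: L2_sqnorm_eq_integral_inner power2_norm_eq_inner)

section \<open>Completeness of \<open>L\<^sup>2\<close>\<close>

lemma nn_integral_le_of_tendsto_AE:
  fixes u :: "nat \<Rightarrow> 'a \<Rightarrow> ennreal"
  assumes "\<And>k. u k \<in> borel_measurable M"
    and "AE x in M. (\<lambda>k. u k x) \<longlonglongrightarrow> v x"
    and "\<forall>\<^sub>F k in sequentially. integral\<^sup>N M (u k) \<le> C"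
  shows "integral\<^sup>N M v \<le> C"
proof -
  have "integral\<^sup>N M v = (\<integral>\<^sup>+ x. liminf (\<lambda>k. u k x) \<partial>M)"
    by (rule nn_integral_cong_AE) (use assms(2) in \<open>auto simp: lim_imp_Liminf\<close>)
  also have "\<dots> \<le> liminf (\<lambda>k. integral\<^sup>N M (u k))" by (rule nn_integral_liminf[OF assms(1)])
  also have "\<dots> \<le> limsup (\<lambda>k. integral\<^sup>N M (u k))" by (rule Liminf_le_Limsup) simp
  also have "\<dots> \<le> C" by (rule Limsup_bounded[OF assms(3)])
  finally show ?thesis .
qed

lemma le_geometric_plus_sq:
  fixes a :: real
  assumes "0 \<le> a"
  shows "a \<le> (1/2)^k + 2^k * a\<^sup>2"
proof (cases "a \<le> (1/2)^k")
  case True then show ?thesis by (simp add: add_increasing2)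
next
  case False
  have "(1/2::real)^k * 2^k = 1" by (simp add: power_mult_distrib[symmetric])
  then have "1 < 2^k * a" using False
    by (metis mult.commute mult_strict_right_mono not_le zero_less_numeral zero_less_power)
  then have "a * 1 \<le> a * (2^k * a)" using assms by (intro mult_left_mono) auto
  then have "a \<le> 2^k * a\<^sup>2" by (simp add: power2_eq_square algebra_simps)
  then show ?thesis by (simp add: add_increasing)
qed

text \<open>Weighting the \<open>k\<close>-th term by \<open>2\<^sup>k\<close> keeps the series of integrals summable while forcing
  \<open>\<bar>d k x\<bar>\<close> below \<open>(1/2)\<^sup>k + 2\<^sup>k \<bar>d k x\<bar>\<^sup>2\<close>.\<close>

lemma AE_summable_of_L2_sqnorm_le_geometric:
  fixes d :: "nat \<Rightarrow> 'a::euclidean_space \<Rightarrow> 'b::euclidean_space"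
  assumes d: "\<And>k. square_integrable (d k)" and small: "\<And>k. L2_sqnorm (d k) < (1/8)^k"
  shows "AE x in lborel. summable (\<lambda>k. d k x)"
proof -
  have [measurable]: "d k \<in> borel_measurable borel" for k using d[of k] by (simp add: square_integrable_def)
  define T where "T x = (\<Sum>k. ennreal (2^k * (norm (d k x))\<^sup>2))" for x
  have "(\<integral>\<^sup>+x. T x \<partial>lborel) = (\<Sum>k. \<integral>\<^sup>+x. ennreal (2^k * (norm (d k x))\<^sup>2) \<partial>lborel)"
    unfolding T_def by (rule nn_integral_suminf) measurable
  also have "\<dots> = (\<Sum>k. ennreal (2^k * L2_sqnorm (d k)))"
  proof (rule suminf_cong)
    fix k
    have "(\<integral>\<^sup>+x. ennreal (2^k * (norm (d k x))\<^sup>2) \<partial>lborel)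
        = ennreal (2^k) * (\<integral>\<^sup>+x. ennreal ((norm (d k x))\<^sup>2) \<partial>lborel)"
      by (subst nn_integral_cmult[symmetric]) (auto simp: ennreal_mult)
    then show "(\<integral>\<^sup>+x. ennreal (2^k * (norm (d k x))\<^sup>2) \<partial>lborel) = ennreal (2^k * L2_sqnorm (d k))"
      using nn_integral_norm_sq[OF d] by (simp add: ennreal_mult L2_sqnorm_nonneg)
  qed
  also have "\<dots> \<le> (\<Sum>k. ennreal ((1/4)^k))"
  proof (rule suminf_le)
    fix k
    have "2^k * L2_sqnorm (d k) \<le> 2^k * (1/8)^k" using small[of k] by (intro mult_left_mono) auto
    also have "\<dots> = (1/4::real)^k" by (simp add: power_mult_distrib[symmetric])
    finally show "ennreal (2^k * L2_sqnorm (d k)) \<le> ennreal ((1/4)^k)" by (rule ennreal_leI)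
  qed auto
  also have "\<dots> = ennreal (\<Sum>k. (1/4::real)^k)"
    by (rule suminf_ennreal2) (auto intro!: summable_geometric)
  finally have "(\<integral>\<^sup>+x. T x \<partial>lborel) \<noteq> \<infinity>" by (auto simp: top_unique)
  then have "AE x in lborel. T x \<noteq> \<infinity>" by (intro nn_integral_PInf_AE) (simp_all add: T_def)
  then show ?thesis
  proof eventually_elim
    case (elim x)
    then have "summable (\<lambda>k. 2^k * (norm (d k x))\<^sup>2)"
      by (intro summable_suminf_not_top) (auto simp: T_def)
    then have "summable (\<lambda>k. (1/2::real)^k + 2^k * (norm (d k x))\<^sup>2)"
      by (intro summable_add summable_geometric) auto
    then have "summable (\<lambda>k. norm (d k x))"
      by (rule summable_comparison_test'[where N=0]) (auto intro!: le_geometric_plus_sq)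
    then show ?case by (rule summable_norm_cancel)
  qed
qed

lemma L2_fast_Cauchy_AE_convergent:
  fixes g :: "nat \<Rightarrow> 'a::euclidean_space \<Rightarrow> 'b::euclidean_space"
  assumes g: "\<And>k. square_integrable (g k)"
    and small: "\<And>k. L2_sqnorm (\<lambda>x. g (Suc k) x - g k x) < (1/8)^k"
  shows "AE x in lborel. (\<lambda>k. g k x) \<longlonglongrightarrow> lim (\<lambda>k. g k x)"
proof -
  have "AE x in lborel. summable (\<lambda>k. g (Suc k) x - g k x)"
    by (rule AE_summable_of_L2_sqnorm_le_geometric[OF square_integrable_diff[OF g g] small])
  then show ?thesis
  proof eventually_elim
    case (elim x)
    have "(\<lambda>k. g 0 x + (\<Sum>j<k. g (Suc j) x - g j x)) \<longlonglongrightarrow> g 0 x + (\<Sum>j. g (Suc j) x - g j x)"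
      by (intro tendsto_add tendsto_const summable_LIMSEQ elim)
    moreover have "(\<lambda>k. g 0 x + (\<Sum>j<k. g (Suc j) x - g j x)) = (\<lambda>k. g k x)"
      by (simp add: sum_lessThan_telescope[of "\<lambda>j. g j x"])
    ultimately have "convergent (\<lambda>k. g k x)" by (auto intro: convergentI)
    then show ?case by (simp add: convergent_LIMSEQ_iff)
  qed
qed

lemma Cauchy_fast_subseq:
  fixes d :: "nat \<Rightarrow> nat \<Rightarrow> real"
  assumes "\<And>e. e > 0 \<Longrightarrow> \<exists>N. \<forall>n\<ge>N. \<forall>m\<ge>N. d n m < e"
  obtains s where "\<And>k. s k \<le> s (Suc k)" "\<And>k. k \<le> s k"
    "\<And>k n m. n \<ge> s k \<Longrightarrow> m \<ge> s k \<Longrightarrow> d n m < (1/8)^k"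
proof -
  obtain N where N: "\<And>k n m. n \<ge> N k \<Longrightarrow> m \<ge> N k \<Longrightarrow> d n m < (1/8)^k"
    using assms[of "(1/8)^_"] by (metis zero_less_divide_1_iff zero_less_numeral zero_less_power)
  define s where "s k = k + (\<Sum>j\<le>k. N j)" for k
  have Ns: "N k \<le> s k" for k
    unfolding s_def using member_le_sum[of k "{..k}" N] by simp
  show ?thesis
  proof (rule that)
    show "s k \<le> s (Suc k)" "k \<le> s k" for k by (simp_all add: s_def)
    show "d n m < (1/8)^k" if "s k \<le> n" "s k \<le> m" for k n m
      using N[of k n m] Ns[of k] that by simp
  qed
qed

lemma L2_sqnorm_le_of_AE_limit:
  fixes g :: "nat \<Rightarrow> 'a::euclidean_space \<Rightarrow> 'b::euclidean_space"
  assumes h: "square_integrable h" and g: "\<And>k. square_integrable (g k)"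
    and F: "F \<in> borel_measurable lborel" and lim: "AE x in lborel. (\<lambda>k. g k x) \<longlonglongrightarrow> F x"
    and bound: "\<forall>\<^sub>F k in sequentially. L2_sqnorm (\<lambda>x. h x - g k x) \<le> e"
  shows "square_integrable (\<lambda>x. h x - F x)" "L2_sqnorm (\<lambda>x. h x - F x) \<le> e"
proof -
  have [measurable]: "h \<in> borel_measurable borel" "g k \<in> borel_measurable borel" "F \<in> borel_measurable borel"
    for k using h g[of k] F by (simp_all add: square_integrable_def)
  obtain k where "L2_sqnorm (\<lambda>x. h x - g k x) \<le> e" using bound unfolding eventually_sequentially by auto
  then have e: "0 \<le> e" using L2_sqnorm_nonneg order.trans by blast
  have nn_le: "(\<integral>\<^sup>+x. ennreal ((norm (h x - F x))\<^sup>2) \<partial>lborel) \<le> ennreal e"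
  proof (rule nn_integral_le_of_tendsto_AE[where u="\<lambda>k x. ennreal ((norm (h x - g k x))\<^sup>2)"])
    show "(\<lambda>x. ennreal ((norm (h x - g k x))\<^sup>2)) \<in> borel_measurable lborel" for k
      by measurable
    show "AE x in lborel. (\<lambda>k. ennreal ((norm (h x - g k x))\<^sup>2)) \<longlonglongrightarrow> ennreal ((norm (h x - F x))\<^sup>2)"
      using lim by eventually_elim (intro tendsto_intros)
    show "\<forall>\<^sub>F k in sequentially. (\<integral>\<^sup>+x. ennreal ((norm (h x - g k x))\<^sup>2) \<partial>lborel) \<le> ennreal e"
      using bound by eventually_elim
        (simp add: nn_integral_norm_sq[OF square_integrable_diff[OF h g]] ennreal_leI)
  qed
  then show sq: "square_integrable (\<lambda>x. h x - F x)"
    by (intro square_integrableI_nn_integral) (auto simp: top_unique intro: le_less_trans)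
  show "L2_sqnorm (\<lambda>x. h x - F x) \<le> e"
    using nn_le nn_integral_norm_sq[OF sq] e by (simp add: ennreal_le_iff L2_sqnorm_nonneg)
qed

lemma L2_limit_of_AE_limit:
  fixes f :: "nat \<Rightarrow> 'a::euclidean_space \<Rightarrow> 'b::euclidean_space"
  assumes f: "\<And>n. square_integrable (f n)"
    and Cauchy: "\<And>e. e > 0 \<Longrightarrow> \<exists>N. \<forall>n\<ge>N. \<forall>m\<ge>N. L2_sqnorm (\<lambda>x. f n x - f m x) < e"
    and s: "\<And>k. k \<le> s k" and F: "F \<in> borel_measurable lborel"
    and lim: "AE x in lborel. (\<lambda>k. f (s k) x) \<longlonglongrightarrow> F x"
  shows "square_integrable F" "(\<lambda>n. L2_sqnorm (\<lambda>x. f n x - F x)) \<longlonglongrightarrow> 0"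
proof -
  have close: "square_integrable (\<lambda>x. f n x - F x) \<and> L2_sqnorm (\<lambda>x. f n x - F x) \<le> e"
    if "e > 0" "n \<ge> N" "\<forall>n\<ge>N. \<forall>m\<ge>N. L2_sqnorm (\<lambda>x. f n x - f m x) < e" for e n N
  proof -
    have "\<forall>\<^sub>F k in sequentially. L2_sqnorm (\<lambda>x. f n x - f (s k) x) \<le> e"
      unfolding eventually_sequentially
    proof (intro exI allI impI)
      fix k assume "N \<le> k"
      then have "N \<le> s k" using s[of k] by linarith
      then have "L2_sqnorm (\<lambda>x. f n x - f (s k) x) < e" using that(2,3) by blast
      then show "L2_sqnorm (\<lambda>x. f n x - f (s k) x) \<le> e" by (rule less_imp_le)
    qed
    from L2_sqnorm_le_of_AE_limit[OF f f F lim this] show ?thesis by blast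
  qed
  obtain N where "\<forall>n\<ge>N. \<forall>m\<ge>N. L2_sqnorm (\<lambda>x. f n x - f m x) < 1" using Cauchy[of 1] by auto
  with close[of 1 N N] have "square_integrable (\<lambda>x. f N x - F x)" by simp
  from square_integrable_diff[OF f[of N] this] show "square_integrable F" by simp
  show "(\<lambda>n. L2_sqnorm (\<lambda>x. f n x - F x)) \<longlonglongrightarrow> 0"
  proof (rule LIMSEQ_I)
    fix r :: real assume r: "0 < r"
    then obtain N where N: "\<forall>n\<ge>N. \<forall>m\<ge>N. L2_sqnorm (\<lambda>x. f n x - f m x) < r/2"
      using Cauchy[of "r/2"] by auto
    show "\<exists>N. \<forall>n\<ge>N. norm (L2_sqnorm (\<lambda>x. f n x - F x) - 0) < r"
    proof (intro exI[of _ N] allI impI)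
      fix n assume "N \<le> n"
      then have "L2_sqnorm (\<lambda>x. f n x - F x) \<le> r/2" using close[OF _ _ N] r by simp
      then show "norm (L2_sqnorm (\<lambda>x. f n x - F x) - 0) < r"
        using r L2_sqnorm_nonneg[of "\<lambda>x. f n x - F x"] by simp
    qed
  qed
qed

text \<open>The usual Riesz--Fischer argument: a subsequence with geometrically small increments
  converges almost everywhere, and Fatou's lemma identifies its limit as the \<open>L\<^sup>2\<close> limit.\<close>

lemma L2_Cauchy_convergent:
  fixes f :: "nat \<Rightarrow> 'a::euclidean_space \<Rightarrow> 'b::euclidean_space"
  assumes f: "\<And>n. square_integrable (f n)"
    and Cauchy: "\<And>e. e > 0 \<Longrightarrow> \<exists>N. \<forall>n\<ge>N. \<forall>m\<ge>N. L2_sqnorm (\<lambda>x. f n x - f m x) < e"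
  obtains F where "square_integrable F" "(\<lambda>n. L2_sqnorm (\<lambda>x. f n x - F x)) \<longlonglongrightarrow> 0"
proof -
  obtain s where mono: "\<And>k. s k \<le> s (Suc k)" and s: "\<And>k. k \<le> s k"
    and fast: "\<And>k n m. n \<ge> s k \<Longrightarrow> m \<ge> s k \<Longrightarrow> L2_sqnorm (\<lambda>x. f n x - f m x) < (1/8)^k"
    using Cauchy_fast_subseq[of "\<lambda>n m. L2_sqnorm (\<lambda>x. f n x - f m x)"] Cauchy by blast
  define F where "F x = lim (\<lambda>k. f (s k) x)" for x
  have "AE x in lborel. (\<lambda>k. f (s k) x) \<longlonglongrightarrow> F x"
    unfolding F_def by (rule L2_fast_Cauchy_AE_convergent[OF f fast[OF mono order.refl]])
  moreover have "F \<in> borel_measurable lborel"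
    unfolding F_def using f by (intro borel_measurable_lim_metric) (simp add: square_integrable_def)
  ultimately show ?thesis
    using L2_limit_of_AE_limit[OF f Cauchy s] that by blast
qed

section \<open>The Dirichlet principle\<close>

lemma parallelogram_midpoint:
  fixes a p q :: "'a::real_inner"
  shows "(norm (a - p))\<^sup>2 + (norm (a - q))\<^sup>2
     = 2 * (norm (a - ((1/2) *\<^sub>R p + (1/2) *\<^sub>R q)))\<^sup>2 + (1/2) * (norm (p - q))\<^sup>2"
  unfolding power2_norm_eq_inner
  by (simp add: inner_diff_left inner_diff_right inner_add_left inner_add_right
      inner_commute[of p q] inner_commute[of q a] inner_commute[of p a] field_simps)

lemma L2_sqnorm_parallelogram:
  fixes a p q :: "'a::euclidean_space \<Rightarrow> 'b::euclidean_space"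
  assumes a: "square_integrable a" and p: "square_integrable p" and q: "square_integrable q"
  shows "L2_sqnorm (\<lambda>x. a x - p x) + L2_sqnorm (\<lambda>x. a x - q x)
     = 2 * L2_sqnorm (\<lambda>x. a x - ((1/2) *\<^sub>R p x + (1/2) *\<^sub>R q x)) + (1/2) * L2_sqnorm (\<lambda>x. p x - q x)"
proof -
  have mid: "square_integrable (\<lambda>x. (1/2) *\<^sub>R p x + (1/2) *\<^sub>R q x)"
    by (intro square_integrable_add square_integrable_scaleR p q)
  have int: "integrable lborel (\<lambda>x. (norm (f x - g x))\<^sup>2)"
    if "square_integrable f" "square_integrable g" for f g :: "'a \<Rightarrow> 'b"
    using square_integrable_diff[OF that] by (simp add: square_integrable_def)
  have "L2_sqnorm (\<lambda>x. a x - p x) + L2_sqnorm (\<lambda>x. a x - q x)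
      = (\<integral>x. (norm (a x - p x))\<^sup>2 + (norm (a x - q x))\<^sup>2 \<partial>lborel)"
    unfolding L2_sqnorm_def by (rule Bochner_Integration.integral_add[OF int[OF a p] int[OF a q], symmetric])
  also have "\<dots> = (\<integral>x. 2 * (norm (a x - ((1/2) *\<^sub>R p x + (1/2) *\<^sub>R q x)))\<^sup>2
      + (1/2) * (norm (p x - q x))\<^sup>2 \<partial>lborel)"
    unfolding parallelogram_midpoint ..
  also have "\<dots> = 2 * L2_sqnorm (\<lambda>x. a x - ((1/2) *\<^sub>R p x + (1/2) *\<^sub>R q x)) + (1/2) * L2_sqnorm (\<lambda>x. p x - q x)"
    unfolding L2_sqnorm_def using int[OF a mid] int[OF p q] by simp
  finally show ?thesis .
qed

text \<open>By the parallelogram law, the distance between two terms is controlled by how far their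
  midpoint is from optimal.\<close>

lemma minimizing_sequence_Cauchy:
  fixes a :: "'a::euclidean_space \<Rightarrow> 'b::euclidean_space" and c :: "nat \<Rightarrow> 'a \<Rightarrow> 'b"
  assumes a: "square_integrable a" and C: "\<And>p. p \<in> C \<Longrightarrow> square_integrable p"
    and mid: "\<And>p q. p \<in> C \<Longrightarrow> q \<in> C \<Longrightarrow> (\<lambda>x. (1/2) *\<^sub>R p x + (1/2) *\<^sub>R q x) \<in> C"
    and lower: "\<And>p. p \<in> C \<Longrightarrow> m \<le> L2_sqnorm (\<lambda>x. a x - p x)"
    and c: "\<And>n. c n \<in> C" and near: "\<And>n. L2_sqnorm (\<lambda>x. a x - c n x) < m + inverse (real (Suc n))"
    and e: "e > 0"
  shows "\<exists>N. \<forall>n\<ge>N. \<forall>k\<ge>N. L2_sqnorm (\<lambda>x. c n x - c k x) < e"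
proof -
  have bound: "L2_sqnorm (\<lambda>x. c n x - c k x) < 2 * inverse (real (Suc n)) + 2 * inverse (real (Suc k))"
    for n k
    using L2_sqnorm_parallelogram[OF a C[OF c] C[OF c], of n k] lower[OF mid[OF c c], of n k]
      near[of n] near[of k] by linarith
  obtain N where N: "inverse (real (Suc N)) < e / 4" using reals_Archimedean[of "e/4"] e by auto
  have "L2_sqnorm (\<lambda>x. c n x - c k x) < e" if "n \<ge> N" "k \<ge> N" for n k
  proof -
    have "inverse (real (Suc n)) \<le> inverse (real (Suc N))" "inverse (real (Suc k)) \<le> inverse (real (Suc N))"
      using that by (auto intro!: le_imp_inverse_le)
    then show ?thesis using bound[of n k] N by linarith
  qed
  then show ?thesis by blast
qed

lemma test_fun_Cauchy_of_cgrad_Cauchy: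
  fixes \<psi> :: "nat \<Rightarrow> 'a::euclidean_space \<Rightarrow> real"
  assumes \<psi>: "\<And>n. test_fun S (\<psi> n)" and S: "S \<subseteq> cball 0 R" and R: "0 \<le> R"
    and grad_Cauchy: "\<And>e. e > 0 \<Longrightarrow> \<exists>N. \<forall>n\<ge>N. \<forall>k\<ge>N. L2_sqnorm (\<lambda>x. cgrad (\<psi> n) x - cgrad (\<psi> k) x) < e"
    and e: "e > 0"
  shows "\<exists>N. \<forall>n\<ge>N. \<forall>k\<ge>N. L2_sqnorm (\<lambda>x. \<psi> n x - \<psi> k x) < e"
proof -
  have pos: "0 < 4 * R\<^sup>2 + 1" by (intro add_nonneg_pos) auto
  obtain N where N: "\<And>n k. n \<ge> N \<Longrightarrow> k \<ge> N \<Longrightarrow> L2_sqnorm (\<lambda>x. cgrad (\<psi> n) x - cgrad (\<psi> k) x) < e / (4 * R\<^sup>2 + 1)"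
    using grad_Cauchy[of "e / (4 * R\<^sup>2 + 1)"] e pos by auto
  have "L2_sqnorm (\<lambda>x. \<psi> n x - \<psi> k x) < e" if "n \<ge> N" "k \<ge> N" for n k
  proof -
    have "L2_sqnorm (\<lambda>x. 1 * \<psi> n x + (-1) * \<psi> k x)
        \<le> 4 * R\<^sup>2 * L2_sqnorm (cgrad (\<lambda>x. 1 * \<psi> n x + (-1) * \<psi> k x))"
      by (rule Poincare_inequality[OF test_fun_lincomb[OF \<psi> \<psi>] S R])
    then have P: "L2_sqnorm (\<lambda>x. \<psi> n x - \<psi> k x) \<le> 4 * R\<^sup>2 * L2_sqnorm (\<lambda>x. cgrad (\<psi> n) x - cgrad (\<psi> k) x)"
      unfolding cgrad_lincomb[OF \<psi> \<psi>] by simp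
    define X where "X = L2_sqnorm (\<lambda>x. cgrad (\<psi> n) x - cgrad (\<psi> k) x)"
    have "X * (4 * R\<^sup>2 + 1) < e" using N[OF that] pos unfolding X_def[symmetric]
      by (simp add: pos_less_divide_eq)
    moreover have "4 * R\<^sup>2 * X \<le> X * (4 * R\<^sup>2 + 1)" using L2_sqnorm_nonneg[of _] unfolding X_def
      by (simp add: algebra_simps)
    ultimately show ?thesis using P unfolding X_def[symmetric] by linarith
  qed
  then show ?thesis by blast
qed

lemma Dirichlet_energy_lower_bound:
  fixes u h :: "'a::euclidean_space \<Rightarrow> real"
  assumes u: "H10_grad \<Omega> u gu" and h: "h \<in> H10 \<Omega>" "(\<lambda>x. h x - u x) \<in> H10 S"
    and S: "S \<subseteq> \<Omega>" and \<Omega>: "\<Omega> \<in> sets borel"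
    and lower: "\<And>\<psi>. test_fun S \<psi> \<Longrightarrow> m \<le> L2_sqnorm (\<lambda>x. gu x - cgrad \<psi> x)"
  shows "m \<le> (LINT x:\<Omega>|lborel. (norm (wgrad h x))\<^sup>2)"
proof -
  obtain gd where d: "H10_grad S (\<lambda>x. h x - u x) gd" using h(2) unfolding H10_def by blast
  obtain \<eta> where "test_approx S (\<lambda>x. h x - u x) gd \<eta>" using H10_grad_test_approx[OF d] .
  then have \<eta>: "\<And>n. test_fun S (\<eta> n)" and gd: "square_integrable gd"
    and grad_lim: "(\<lambda>n. L2_sqnorm (\<lambda>x. cgrad (\<eta> n) x - gd x)) \<longlonglongrightarrow> 0"
    unfolding test_approx_def by auto
  have "H10_grad \<Omega> (\<lambda>x. 1 * u x + 1 * (h x - u x)) (\<lambda>x. 1 *\<^sub>R gu x + 1 *\<^sub>R gd x)"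
    by (rule H10_grad_lincomb[OF u H10_grad_mono[OF d S]])
  then have "H10_grad \<Omega> h (\<lambda>x. gu x + gd x)" by simp
  then have energy: "(LINT x:\<Omega>|lborel. (norm (wgrad h x))\<^sup>2) = L2_sqnorm (\<lambda>x. gu x + gd x)"
    by (rule set_integral_norm_wgrad_sq[OF _ \<Omega>])
  have "cgrad (\<lambda>x. (-1) * \<eta> n x + 0 * \<eta> n x) x = - cgrad (\<eta> n) x" for n x
    using cgrad_lincomb[OF \<eta> \<eta>, of "-1" n 0 n x] by simp
  then have "m \<le> L2_sqnorm (\<lambda>x. gu x + cgrad (\<eta> n) x)" for n
    using lower[OF test_fun_lincomb[OF \<eta> \<eta>, of "-1" n 0 n]] by simp
  moreover have "(\<lambda>n. L2_sqnorm (\<lambda>x. gu x + cgrad (\<eta> n) x)) \<longlonglongrightarrow> L2_sqnorm (\<lambda>x. gu x + gd x)"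
    using H10_gradD(2)[OF u] test_fun_square_integrable(2)[OF \<eta>] gd grad_lim
    by (intro L2_sqnorm_tendsto) (auto intro: square_integrable_add)
  ultimately show ?thesis unfolding energy by (intro LIMSEQ_le_const) auto
qed

lemma cgrad_image_midpoint:
  assumes "p \<in> cgrad ` {\<psi>. test_fun S \<psi>}" "q \<in> cgrad ` {\<psi>. test_fun S \<psi>}"
  shows "(\<lambda>x. (1/2) *\<^sub>R p x + (1/2) *\<^sub>R q x) \<in> cgrad ` {\<psi>. test_fun S \<psi>}"
proof -
  obtain \<phi> \<phi>' where "test_fun S \<phi>" "test_fun S \<phi>'" "p = cgrad \<phi>" "q = cgrad \<phi>'"
    using assms by blast
  then show ?thesis
    using test_fun_lincomb[of S \<phi> \<phi>' "1/2" "1/2"] cgrad_lincomb[of S \<phi> S \<phi>' "1/2" "1/2"]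
    by (auto intro!: image_eqI[where x="\<lambda>x. 1/2 * \<phi> x + 1/2 * \<phi>' x"])
qed

lemma minimizing_test_fun_sequence:
  fixes g :: "'a::euclidean_space \<Rightarrow> 'a"
  assumes g: "square_integrable g"
  obtains m \<psi> where "\<And>\<phi>. test_fun S \<phi> \<Longrightarrow> m \<le> L2_sqnorm (\<lambda>x. g x - cgrad \<phi> x)"
    "\<And>n. test_fun S (\<psi> n)" "(\<lambda>n. L2_sqnorm (\<lambda>x. g x - cgrad (\<psi> n) x)) \<longlonglongrightarrow> m"
    "\<And>e. e > 0 \<Longrightarrow> \<exists>N. \<forall>n\<ge>N. \<forall>k\<ge>N. L2_sqnorm (\<lambda>x. cgrad (\<psi> n) x - cgrad (\<psi> k) x) < e"
proof -
  define E where "E \<phi> = L2_sqnorm (\<lambda>x. g x - cgrad \<phi> x)" for \<phi>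
  define m where "m = Inf (E ` {\<phi>. test_fun S \<phi>})"
  have "bdd_below (E ` {\<phi>. test_fun S \<phi>})"
    unfolding bdd_below_def E_def using L2_sqnorm_nonneg by blast
  then have lower: "m \<le> E \<phi>" if "test_fun S \<phi>" for \<phi>
    unfolding m_def using that by (simp add: cInf_lower)
  have "\<exists>\<phi>. test_fun S \<phi> \<and> E \<phi> < m + inverse (real (Suc n))" for n
    using cInf_lessD[of "E ` {\<phi>. test_fun S \<phi>}" "m + inverse (real (Suc n))"] test_fun_zero
    unfolding m_def by force
  then obtain \<psi> where \<psi>: "\<And>n. test_fun S (\<psi> n)" and near: "\<And>n. E (\<psi> n) < m + inverse (real (Suc n))"
    by metis
  show ?thesis
  proof (rule that[of m \<psi>])
    show "m \<le> L2_sqnorm (\<lambda>x. g x - cgrad \<phi> x)" if "test_fun S \<phi>" for \<phi>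
      using lower[OF that] unfolding E_def .
    show "(\<lambda>n. L2_sqnorm (\<lambda>x. g x - cgrad (\<psi> n) x)) \<longlonglongrightarrow> m"
    proof (rule tendsto_sandwich[OF _ _ tendsto_const])
      show "\<forall>\<^sub>F n in sequentially. m \<le> L2_sqnorm (\<lambda>x. g x - cgrad (\<psi> n) x)"
        using lower \<psi> unfolding E_def by auto
      show "\<forall>\<^sub>F n in sequentially. L2_sqnorm (\<lambda>x. g x - cgrad (\<psi> n) x) \<le> m + inverse (real (Suc n))"
        using near unfolding E_def by (intro always_eventually allI less_imp_le)
      show "(\<lambda>n. m + inverse (real (Suc n))) \<longlonglongrightarrow> m"
        using tendsto_add[OF tendsto_const LIMSEQ_inverse_real_of_nat, of m] by simp
    qed
    show "\<exists>N. \<forall>n\<ge>N. \<forall>k\<ge>N. L2_sqnorm (\<lambda>x. cgrad (\<psi> n) x - cgrad (\<psi> k) x) < e" if "e > 0" for e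
    proof (rule minimizing_sequence_Cauchy[OF g, where C="cgrad ` {\<phi>. test_fun S \<phi>}" and m=m])
      show "square_integrable p" if "p \<in> cgrad ` {\<phi>. test_fun S \<phi>}" for p
        using that test_fun_square_integrable(2) by blast
      show "m \<le> L2_sqnorm (\<lambda>x. g x - p x)" if "p \<in> cgrad ` {\<phi>. test_fun S \<phi>}" for p
        using that lower unfolding E_def by blast
      show "L2_sqnorm (\<lambda>x. g x - cgrad (\<psi> n) x) < m + inverse (real (Suc n))" for n
        using near[of n] unfolding E_def .
      show "(\<lambda>x. (1/2) *\<^sub>R p x + (1/2) *\<^sub>R q x) \<in> cgrad ` {\<phi>. test_fun S \<phi>}"
        if "p \<in> cgrad ` {\<phi>. test_fun S \<phi>}" "q \<in> cgrad ` {\<phi>. test_fun S \<phi>}" for p q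
        using that by (rule cgrad_image_midpoint)
      show "cgrad (\<psi> n) \<in> cgrad ` {\<phi>. test_fun S \<phi>}" for n using \<psi> by blast
    qed (rule that)
  qed (rule \<psi>)
qed

lemma test_approx_of_cgrad_Cauchy:
  fixes \<psi> :: "nat \<Rightarrow> 'a::euclidean_space \<Rightarrow> real"
  assumes \<psi>: "\<And>n. test_fun S (\<psi> n)" and S: "bounded S"
    and grad_Cauchy: "\<And>e. e > 0 \<Longrightarrow> \<exists>N. \<forall>n\<ge>N. \<forall>k\<ge>N. L2_sqnorm (\<lambda>x. cgrad (\<psi> n) x - cgrad (\<psi> k) x) < e"
  obtains W G where "test_approx S W G \<psi>"
proof -
  obtain b where "\<forall>x\<in>S. norm x \<le> b" using S unfolding bounded_iff by blast
  then have R: "0 \<le> max b 0" "S \<subseteq> cball 0 (max b 0)" by auto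
  have fun_Cauchy: "\<exists>N. \<forall>n\<ge>N. \<forall>k\<ge>N. L2_sqnorm (\<lambda>x. \<psi> n x - \<psi> k x) < e" if "e > 0" for e
    by (rule test_fun_Cauchy_of_cgrad_Cauchy[OF \<psi> R(2,1) grad_Cauchy that])
  have \<psi>_sq: "\<And>n. square_integrable (\<psi> n)" "\<And>n. square_integrable (cgrad (\<psi> n))"
    using test_fun_square_integrable \<psi> by blast+
  obtain W where "square_integrable W" "(\<lambda>n. L2_sqnorm (\<lambda>x. \<psi> n x - W x)) \<longlonglongrightarrow> 0"
    by (rule L2_Cauchy_convergent[OF \<psi>_sq(1) fun_Cauchy])
  moreover obtain G where "square_integrable G" "(\<lambda>n. L2_sqnorm (\<lambda>x. cgrad (\<psi> n) x - G x)) \<longlonglongrightarrow> 0"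
    by (rule L2_Cauchy_convergent[OF \<psi>_sq(2) grad_Cauchy])
  ultimately show ?thesis using \<psi> that unfolding test_approx_def by blast
qed

text \<open>The minimiser is \<open>u - W\<close>, where \<open>W\<close> is the \<open>H\<^sup>1\<close>-limit of test functions on \<open>S\<close> whose
  gradients best approximate \<open>\<nabla>u\<close>.\<close>

lemma Dirichlet_principle:
  fixes u :: "'a::euclidean_space \<Rightarrow> real"
  assumes u: "H10_grad \<Omega> u gu" and bounded: "bounded \<Omega>" and S: "S \<subseteq> \<Omega>" and \<Omega>: "\<Omega> \<in> sets borel"
  shows "\<exists>f. f \<in> H10 \<Omega> \<and> (\<lambda>x. f x - u x) \<in> H10 S \<and>
      (\<forall>h. h \<in> H10 \<Omega> \<and> (\<lambda>x. h x - u x) \<in> H10 S \<longrightarrow>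
         (LINT x:\<Omega>|lborel. (norm (wgrad f x))\<^sup>2) \<le> (LINT x:\<Omega>|lborel. (norm (wgrad h x))\<^sup>2))"
proof -
  have gu: "square_integrable gu" using H10_gradD(2)[OF u] .
  obtain m \<psi> where lower: "\<And>\<phi>. test_fun S \<phi> \<Longrightarrow> m \<le> L2_sqnorm (\<lambda>x. gu x - cgrad \<phi> x)"
    and \<psi>: "\<And>n. test_fun S (\<psi> n)" and lim: "(\<lambda>n. L2_sqnorm (\<lambda>x. gu x - cgrad (\<psi> n) x)) \<longlonglongrightarrow> m"
    and grad_Cauchy: "\<And>e. e > 0 \<Longrightarrow> \<exists>N. \<forall>n\<ge>N. \<forall>k\<ge>N. L2_sqnorm (\<lambda>x. cgrad (\<psi> n) x - cgrad (\<psi> k) x) < e"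
    using minimizing_test_fun_sequence[OF gu] by blast
  obtain W G where approx_W: "test_approx S W G \<psi>"
    using test_approx_of_cgrad_Cauchy[OF \<psi> bounded_subset[OF bounded S] grad_Cauchy] by blast
  have W: "H10_grad S W G" by (rule test_approx_H10_grad[OF approx_W])
  define f where "f x = u x - W x" for x
  have "H10_grad \<Omega> (\<lambda>x. 1 * u x + (-1) * W x) (\<lambda>x. 1 *\<^sub>R gu x + (-1) *\<^sub>R G x)"
    by (rule H10_grad_lincomb[OF u H10_grad_mono[OF W S]])
  then have f: "H10_grad \<Omega> f (\<lambda>x. gu x - G x)" by (simp add: f_def[abs_def])
  have "H10_grad S (\<lambda>x. (-1) * W x + 0 * W x) (\<lambda>x. (-1) *\<^sub>R G x + 0 *\<^sub>R G x)"
    by (rule H10_grad_lincomb[OF W W])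
  then have "(\<lambda>x. f x - u x) \<in> H10 S" unfolding H10_def f_def by auto
  moreover have "(LINT x:\<Omega>|lborel. (norm (wgrad f x))\<^sup>2) = m"
  proof -
    have G: "square_integrable G" "(\<lambda>n. L2_sqnorm (\<lambda>x. cgrad (\<psi> n) x - G x)) \<longlonglongrightarrow> 0"
      using approx_W unfolding test_approx_def by auto
    have "L2_sqnorm (\<lambda>x. (gu x - cgrad (\<psi> n) x) - (gu x - G x)) = L2_sqnorm (\<lambda>x. cgrad (\<psi> n) x - G x)"
      for n unfolding L2_sqnorm_def by (simp add: norm_minus_commute)
    then have "(\<lambda>n. L2_sqnorm (\<lambda>x. gu x - cgrad (\<psi> n) x)) \<longlonglongrightarrow> L2_sqnorm (\<lambda>x. gu x - G x)"
      using G(2) test_fun_square_integrable(2)[OF \<psi>]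
      by (intro L2_sqnorm_tendsto[OF square_integrable_diff[OF gu] square_integrable_diff[OF gu G(1)]])
        simp_all
    from LIMSEQ_unique[OF this lim] show ?thesis unfolding set_integral_norm_wgrad_sq[OF f \<Omega>] .
  qed
  moreover have "f \<in> H10 \<Omega>" using f unfolding H10_def by blast
  ultimately show ?thesis
    using Dirichlet_energy_lower_bound[OF u _ _ S \<Omega>, of _ m] lower by auto
qed

lemma Vfun_H10:
  fixes u :: "'a::euclidean_space \<Rightarrow> real"
  assumes "H10_grad \<Omega> u gu" and "bounded \<Omega>" and "\<Omega> \<in> sets borel"
  shows "Vfun \<Omega> K u \<in> H10 \<Omega>" "(\<lambda>x. Vfun \<Omega> K u x - u x) \<in> H10 (\<Omega> - K)"
proof -
  have "\<exists>f. f \<in> H10 \<Omega> \<and> (\<lambda>x. f x - u x) \<in> H10 (\<Omega> - K) \<and>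
      (\<forall>h. h \<in> H10 \<Omega> \<and> (\<lambda>x. h x - u x) \<in> H10 (\<Omega> - K) \<longrightarrow>
         (LINT x:\<Omega>|lborel. (norm (wgrad f x))\<^sup>2) \<le> (LINT x:\<Omega>|lborel. (norm (wgrad h x))\<^sup>2))"
    by (rule Dirichlet_principle[OF assms(1,2) Diff_subset assms(3)])
  from someI_ex[OF this] show "Vfun \<Omega> K u \<in> H10 \<Omega>" "(\<lambda>x. Vfun \<Omega> K u x - u x) \<in> H10 (\<Omega> - K)"
    unfolding Vfun_def by blast+
qed

lemma Proj_H10_grad:
  fixes u :: "'a::euclidean_space \<Rightarrow> real"
  assumes u: "H10_grad \<Omega> u gu" and "bounded \<Omega>" and "\<Omega> \<in> sets borel"
  obtains gV where "H10_grad \<Omega> (Vfun \<Omega> K u) gV" "H10_grad (\<Omega> - K) (Proj \<Omega> K u) (\<lambda>x. gu x - gV x)"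
proof -
  obtain gV where V: "H10_grad \<Omega> (Vfun \<Omega> K u) gV"
    using Vfun_H10(1)[OF assms] unfolding H10_def by blast
  obtain gd where d: "H10_grad (\<Omega> - K) (\<lambda>x. Vfun \<Omega> K u x - u x) gd"
    using Vfun_H10(2)[OF assms] unfolding H10_def by blast
  have "H10_grad \<Omega> (\<lambda>x. 1 * u x + (-1) * Vfun \<Omega> K u x) (\<lambda>x. 1 *\<^sub>R gu x + (-1) *\<^sub>R gV x)"
    by (rule H10_grad_lincomb[OF u V])
  then have P: "H10_grad \<Omega> (Proj \<Omega> K u) (\<lambda>x. gu x - gV x)" by (simp add: Proj_def)
  have "H10_grad (\<Omega> - K) (\<lambda>x. (-1) * (Vfun \<Omega> K u x - u x) + 0 * (Vfun \<Omega> K u x - u x))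
      (\<lambda>x. (-1) *\<^sub>R gd x + 0 *\<^sub>R gd x)"
    by (rule H10_grad_lincomb[OF d d])
  then have P': "H10_grad (\<Omega> - K) (Proj \<Omega> K u) (\<lambda>x. - gd x)" by (simp add: Proj_def)
  have "AE x in lborel. - gd x = gu x - gV x"
    using wgrad_AE(1)[OF P] wgrad_AE(1)[OF P'] by eventually_elim simp
  moreover have "(\<lambda>x. gu x - gV x) \<in> borel_measurable lborel"
    using H10_gradD(2)[OF P] by (simp add: square_integrable_def)
  ultimately have "H10_grad (\<Omega> - K) (Proj \<Omega> K u) (\<lambda>x. gu x - gV x)"
    by (rule H10_grad_cong_AE[OF P', rotated])
  with V show ?thesis by (rule that)
qed

text \<open>The form \<open>\<integral> \<nabla>u \<cdot> \<nabla>v - \<lambda> \<integral> u v\<close> of the paper, taking gradient representatives as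
  arguments: \<open>wgrad\<close> is a choice, so it is linear only almost everywhere.\<close>

definition shifted_dirichlet_form ::
    "real \<Rightarrow> ('a::euclidean_space \<Rightarrow> real) \<Rightarrow> ('a \<Rightarrow> 'a) \<Rightarrow> ('a \<Rightarrow> real) \<Rightarrow> ('a \<Rightarrow> 'a) \<Rightarrow> real" where
  "shifted_dirichlet_form lam u g v h = (\<integral>x. g x \<bullet> h x \<partial>lborel) - lam * (\<integral>x. u x * v x \<partial>lborel)"

lemma set_integrals_eq_shifted_dirichlet_form:
  fixes u v :: "'a::euclidean_space \<Rightarrow> real"
  assumes u: "H10_grad U u g" and v: "H10_grad U v h" and U: "U \<in> sets borel"
  shows "(LINT x:U|lborel. wgrad u x \<bullet> wgrad v x) - lam * (LINT x:U|lborel. u x * v x)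
    = shifted_dirichlet_form lam u g v h"
  unfolding shifted_dirichlet_form_def set_integral_wgrad_inner[OF u v U]
    set_integral_mult_H10[OF u H10_gradD(1)[OF v] U] ..

lemma shifted_dirichlet_form_commute:
  "shifted_dirichlet_form lam u g v h = shifted_dirichlet_form lam v h u g"
  unfolding shifted_dirichlet_form_def by (simp add: inner_commute mult.commute)

lemma shifted_dirichlet_form_eigenspace_D:
  fixes u \<phi> :: "'a::euclidean_space \<Rightarrow> real"
  assumes "u \<in> eigenspace_D \<Omega> lam" and u: "H10_grad \<Omega> u g" and \<phi>: "H10_grad \<Omega> \<phi> h"
    and \<Omega>: "\<Omega> \<in> sets borel"
  shows "shifted_dirichlet_form lam u g \<phi> h = 0"
proof -
  have "\<phi> \<in> H10 \<Omega>" using \<phi> unfolding H10_def by blast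
  then have "(LINT x:\<Omega>|lborel. wgrad u x \<bullet> wgrad \<phi> x) - lam * (LINT x:\<Omega>|lborel. u x * \<phi> x) = 0"
    using assms(1) unfolding eigenspace_D_def by simp
  then show ?thesis unfolding set_integrals_eq_shifted_dirichlet_form[OF u \<phi> \<Omega>] .
qed

lemma shifted_dirichlet_form_diff:
  fixes u v V V' :: "'a::euclidean_space \<Rightarrow> real"
  assumes "square_integrable u" "square_integrable g" "square_integrable v" "square_integrable h"
    "square_integrable V" "square_integrable gV" "square_integrable V'" "square_integrable gV'"
  shows "shifted_dirichlet_form lam (\<lambda>x. u x - V x) (\<lambda>x. g x - gV x) (\<lambda>x. v x - V' x) (\<lambda>x. h x - gV' x)
    = shifted_dirichlet_form lam u g v h - shifted_dirichlet_form lam u g V' gV'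
      - shifted_dirichlet_form lam V gV v h + shifted_dirichlet_form lam V gV V' gV'"
proof -
  have fun_part: "(\<integral>x. (u x - V x) * (v x - V' x) \<partial>lborel)
    = (\<integral>x. u x * v x \<partial>lborel) - (\<integral>x. u x * V' x \<partial>lborel) - (\<integral>x. V x * v x \<partial>lborel)
      + (\<integral>x. V x * V' x \<partial>lborel)"
    using integral_inner_diff_diff[of u V v V'] assms by simp
  have grad_part: "(\<integral>x. (g x - gV x) \<bullet> (h x - gV' x) \<partial>lborel)
    = (\<integral>x. g x \<bullet> h x \<partial>lborel) - (\<integral>x. g x \<bullet> gV' x \<partial>lborel) - (\<integral>x. gV x \<bullet> h x \<partial>lborel)
      + (\<integral>x. gV x \<bullet> gV' x \<partial>lborel)"
    using assms by (intro integral_inner_diff_diff)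
  show ?thesis unfolding shifted_dirichlet_form_def fun_part grad_part by (simp add: algebra_simps)
qed

theorem lemma3p5:
  fixes \<Omega> K :: "'a::euclidean_space set" and lam :: real and u v :: "'a \<Rightarrow> real"
  assumes "DIM('a) \<ge> 2" and "bounded \<Omega>" and "open \<Omega>"
    and "compact K" and "K \<subseteq> \<Omega>"
    and "dirichlet_eigenvalue \<Omega> lam"
    and "u \<in> eigenspace_D \<Omega> lam" and "v \<in> eigenspace_D \<Omega> lam"
  shows "qform \<Omega> K lam (Proj \<Omega> K u) (Proj \<Omega> K v) = rform \<Omega> K lam u v"
proof -
  let ?B = "shifted_dirichlet_form lam"
  have \<Omega>: "\<Omega> \<in> sets borel" using \<open>open \<Omega>\<close> by (simp add: borel_open)
  have \<Omega>K: "\<Omega> - K \<in> sets borel" using \<Omega> \<open>compact K\<close> by (auto simp: borel_closed compact_imp_closed)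
  obtain gu gv where u: "H10_grad \<Omega> u gu" and v: "H10_grad \<Omega> v gv"
    using assms(7,8) unfolding eigenspace_D_def H10_def by blast
  obtain gV where V: "H10_grad \<Omega> (Vfun \<Omega> K u) gV"
    and Pu: "H10_grad (\<Omega> - K) (Proj \<Omega> K u) (\<lambda>x. gu x - gV x)"
    using Proj_H10_grad[OF u \<open>bounded \<Omega>\<close> \<Omega>] .
  obtain gV' where V': "H10_grad \<Omega> (Vfun \<Omega> K v) gV'"
    and Pv: "H10_grad (\<Omega> - K) (Proj \<Omega> K v) (\<lambda>x. gv x - gV' x)"
    using Proj_H10_grad[OF v \<open>bounded \<Omega>\<close> \<Omega>] .
  have "qform \<Omega> K lam (Proj \<Omega> K u) (Proj \<Omega> K v)
      = ?B (Proj \<Omega> K u) (\<lambda>x. gu x - gV x) (Proj \<Omega> K v) (\<lambda>x. gv x - gV' x)"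
    unfolding qform_def by (rule set_integrals_eq_shifted_dirichlet_form[OF Pu Pv \<Omega>K])
  also have "\<dots> = ?B u gu v gv - ?B u gu (Vfun \<Omega> K v) gV' - ?B (Vfun \<Omega> K u) gV v gv
      + ?B (Vfun \<Omega> K u) gV (Vfun \<Omega> K v) gV'"
    unfolding Proj_def
    using H10_gradD(1,2)[OF u] H10_gradD(1,2)[OF v] H10_gradD(1,2)[OF V] H10_gradD(1,2)[OF V']
    by (rule shifted_dirichlet_form_diff)
  also have "\<dots> = ?B (Vfun \<Omega> K u) gV (Vfun \<Omega> K v) gV'"
    using shifted_dirichlet_form_eigenspace_D[OF assms(7) u v \<Omega>]
      shifted_dirichlet_form_eigenspace_D[OF assms(7) u V' \<Omega>]
      shifted_dirichlet_form_eigenspace_D[OF assms(8) v V \<Omega>]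
    by (simp add: shifted_dirichlet_form_commute[of lam "Vfun \<Omega> K u" gV v gv])
  also have "\<dots> = rform \<Omega> K lam u v"
    unfolding rform_def by (rule set_integrals_eq_shifted_dirichlet_form[OF V V' \<Omega>, symmetric])
  finally show ?thesis .
qed

end
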